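(* In every execution of Algorithm BLOCK (defined in the context) on the Filling problem for a connected graph $G$ in the ASYNC model, there is at most one robot in state Leader at any time.
   Context: Filling problem (single Door). Let $G$ be a finite connected graph with $n$ vertices, a priori unknown to the robots, whose maximum degree is at most $\Delta$, where $\Delta$ is known to the robots. One vertex, the Door, is designated and has degree $1$. For every vertex its neighbours are arranged in a fixed cyclic order, visible to a robot located at that vertex. Robots are placed one by one at the Door: whenever the Door is unoccupied, a new robot is immediately placed there. Robots move along edges. The goal is that no two robots are ever at the same vertex and eventually every vertex is occupied by exactly one robot and all robots have terminated. Robots are anonymous, identical, autonomous and cannot communicate directly; each carries a light showing one of a finite set of colors (the light being off counts as a color), visible to robots within their visibility range. A robot with visibility range $h$ hops sees the vertices within graph distance $h$, the robots on them and their lights. Robots act in Look–Compute–Move cycles. In the ASYNC model robots are activated independently after finite but arbitrarily long delays and each phase has finite but arbitrary duration. Algorithm BLOCK (visibility $2$ hops). States: None, Follower, Leader, Finished. Colors: $\Delta$ direction colors (DIR), one per possible neighbour index, where one distinguished direction value "$\Delta$" means "I am stuck"; CONF; CONF2; MOV; off. An unoccupied vertex is blocked (for a Leader) if it is adjacent to some other robot whose light is on and does not show the special color $\Delta$. A robot placed at the Door is in state None: if its unique neighbour is unoccupied it becomes Leader and moves there (showing MOV); otherwise it becomes a Follower, with the neighbouring robot as its predecessor (it is that robot's successor). Leader: it chooses as target an unoccupied, unblocked neighbour, shows the corresponding DIR color, waits until its successor (if any) shows CONF (or CONF2), and then, if the target is still unoccupied, sets MOV and moves there; if the target has become occupied it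 chooses a new unoccupied unblocked target. If the Leader has no unoccupied unblocked neighbour, it shows the special color $\Delta$; its successor confirms; the old Leader turns its light off and becomes Finished, and the successor becomes the new Leader. Follower: when its predecessor shows a direction, it records it and shows CONF; when the vertex its predecessor occupied becomes unoccupied, it shows the DIR color of that vertex, waits until its successor (if any) shows CONF, then sets MOV, moves there; if the predecessor changes its shown direction, it records it and shows CONF2. Moving robots show MOV while moving. *)

theory Defs
  imports Main
begin

text \<open>A graph is given by a vertex set V and, for every vertex u, the list
  ports u of its neighbours in their fixed (cyclic) order; port k of u is
  ports u ! k (0-based).\<close>

definition edges :: "('v \<Rightarrow> 'v list) \<Rightarrow> 'v set \<Rightarrow> ('v \<times> 'v) set" where
  "edges ports V = {(u, w). u \<in> V \<and> w \<in> set (ports u)}"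

definition port_graph :: "'v set \<Rightarrow> ('v \<Rightarrow> 'v list) \<Rightarrow> 'v \<Rightarrow> nat \<Rightarrow> bool" where
  "port_graph V ports door Delta \<longleftrightarrow>
     finite V \<and> door \<in> V \<and>
     (\<forall>u\<in>V. distinct (ports u) \<and> set (ports u) \<subseteq> V \<and> u \<notin> set (ports u)
            \<and> length (ports u) \<le> Delta) \<and>
     (\<forall>u\<in>V. \<forall>w\<in>set (ports u). u \<in> set (ports w)) \<and>
     (\<forall>u\<in>V. \<forall>w\<in>V. (u, w) \<in> (edges ports V)\<^sup>*) \<and>
     length (ports door) = 1"

definition port_of :: "('v \<Rightarrow> 'v list) \<Rightarrow> 'v \<Rightarrow> 'v \<Rightarrow> nat" where
  "port_of ports w u = (THE j. j < length (ports w) \<and> ports w ! j = u)"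

definition within2 :: "('v \<Rightarrow> 'v list) \<Rightarrow> 'v \<Rightarrow> 'v \<Rightarrow> bool" where
  "within2 ports u v \<longleftrightarrow> v = u \<or> v \<in> set (ports u) \<or> (\<exists>w\<in>set (ports u). v \<in> set (ports w))"

datatype rstate = SNone | Follower | Leader | Finished

text \<open>Lights: Off, a direction colour Dir k (port index k), the special
  direction value Delta ("I am stuck") written DStuck, CONF, CONF2, MOV.\<close>
datatype color = Off | Dir nat | DStuck | Conf | Conf2 | Mov

text \<open>Local state of a robot: position, algorithm state, light, port towards
  its predecessor, port towards its successor, and the recorded direction of
  its predecessor (Off = nothing recorded at the current vertex).\<close>
record 'v robot =
  pos :: 'v
  st  :: rstate
  col :: color
  pp  :: "nat option"
  sp  :: "nat option"
  rcd :: color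

text \<open>A snapshot maps each vertex to the set of lights of robots on it
  (empty = unoccupied); vertices beyond 2 hops are seen as empty.\<close>
type_synonym 'v snapshot = "'v \<Rightarrow> color set"

datatype 'v phase = Idle | Looked "'v snapshot" | Moving nat

record 'v config =
  nr  :: nat
  rob :: "nat \<Rightarrow> 'v robot"
  ph  :: "nat \<Rightarrow> 'v phase"

definition new_robot :: "'v \<Rightarrow> 'v robot" where
  "new_robot door = \<lparr>pos = door, st = SNone, col = Off, pp = None, sp = None, rcd = Off\<rparr>"

definition init_config :: "'v \<Rightarrow> 'v config" where
  "init_config door = \<lparr>nr = 1, rob = (\<lambda>_. new_robot door), ph = (\<lambda>_. Idle)\<rparr>"

definition lights_at :: "'v config \<Rightarrow> 'v \<Rightarrow> color set" where
  "lights_at c v = {col (rob c i) | i. i < nr c \<and> pos (rob c i) = v}"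

definition view :: "('v \<Rightarrow> 'v list) \<Rightarrow> 'v config \<Rightarrow> 'v \<Rightarrow> 'v snapshot" where
  "view ports c u = (\<lambda>v. if within2 ports u v then lights_at c v else {})"

definition is_dir :: "color \<Rightarrow> bool" where
  "is_dir x \<longleftrightarrow> (\<exists>k. x = Dir k) \<or> x = DStuck"

text \<open>Unoccupied, unblocked neighbour (port k) of a robot at u: a vertex is
  blocked if adjacent to some other robot whose light is on and not DStuck.\<close>
definition free_port :: "('v \<Rightarrow> 'v list) \<Rightarrow> 'v snapshot \<Rightarrow> 'v \<Rightarrow> nat \<Rightarrow> bool" where
  "free_port ports S u k \<longleftrightarrow> k < length (ports u) \<and> S (ports u ! k) = {} \<and>
     (\<forall>w\<in>set (ports (ports u ! k)). w \<noteq> u \<longrightarrow> (\<forall>x\<in>S w. x = Off \<or> x = DStuck))"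

definition succ_confirmed :: "('v \<Rightarrow> 'v list) \<Rightarrow> 'v snapshot \<Rightarrow> 'v robot \<Rightarrow> bool" where
  "succ_confirmed ports S r \<longleftrightarrow>
     (case sp r of None \<Rightarrow> True
      | Some j \<Rightarrow> S (ports (pos r) ! j) \<inter> {Conf, Conf2} \<noteq> {})"

text \<open>block_rule ports S r r' mv: from snapshot S, a robot with local state r
  may switch to local state r' and then move through port mv (None = stay).\<close>
inductive block_rule :: "('v \<Rightarrow> 'v list) \<Rightarrow> 'v snapshot \<Rightarrow> 'v robot \<Rightarrow> 'v robot \<Rightarrow> nat option \<Rightarrow> bool"
  for ports :: "'v \<Rightarrow> 'v list" where
  none_leader:
    "\<lbrakk>st r = SNone; S (ports (pos r) ! 0) = {}\<rbrakk>
     \<Longrightarrow> block_rule ports S r (r\<lparr>st := Leader, col := Mov\<rparr>) (Some 0)"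
| none_follower:
    "\<lbrakk>st r = SNone; S (ports (pos r) ! 0) \<noteq> {}\<rbrakk>
     \<Longrightarrow> block_rule ports S r (r\<lparr>st := Follower, col := Off, pp := Some 0, rcd := Off\<rparr>) None"
| leader_choose:
    "\<lbrakk>st r = Leader; \<not> is_dir (col r); free_port ports S (pos r) k\<rbrakk>
     \<Longrightarrow> block_rule ports S r (r\<lparr>col := Dir k\<rparr>) None"
| leader_stuck:
    "\<lbrakk>st r = Leader; \<not> is_dir (col r); \<forall>k. \<not> free_port ports S (pos r) k\<rbrakk>
     \<Longrightarrow> block_rule ports S r (r\<lparr>col := DStuck\<rparr>) None"
| leader_move:
    "\<lbrakk>st r = Leader; col r = Dir k; succ_confirmed ports S r; S (ports (pos r) ! k) = {}\<rbrakk>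
     \<Longrightarrow> block_rule ports S r (r\<lparr>col := Mov\<rparr>) (Some k)"
| leader_rechoose:
    "\<lbrakk>st r = Leader; col r = Dir k; S (ports (pos r) ! k) \<noteq> {}; free_port ports S (pos r) k'\<rbrakk>
     \<Longrightarrow> block_rule ports S r (r\<lparr>col := Dir k'\<rparr>) None"
| leader_restuck:
    "\<lbrakk>st r = Leader; col r = Dir k; S (ports (pos r) ! k) \<noteq> {}; \<forall>k'. \<not> free_port ports S (pos r) k'\<rbrakk>
     \<Longrightarrow> block_rule ports S r (r\<lparr>col := DStuck\<rparr>) None"
| leader_finish:
    "\<lbrakk>st r = Leader; col r = DStuck; succ_confirmed ports S r\<rbrakk>
     \<Longrightarrow> block_rule ports S r (r\<lparr>st := Finished, col := Off\<rparr>) None"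
| follower_record:
    "\<lbrakk>st r = Follower; pp r = Some j; x \<in> S (ports (pos r) ! j); is_dir x; x \<noteq> rcd r\<rbrakk>
     \<Longrightarrow> block_rule ports S r
           (r\<lparr>rcd := x, col := (if is_dir (rcd r) then Conf2 else Conf)\<rparr>) None"
| follower_show:
    "\<lbrakk>st r = Follower; pp r = Some j; S (ports (pos r) ! j) = {}; rcd r = Dir d; col r \<noteq> Dir j\<rbrakk>
     \<Longrightarrow> block_rule ports S r (r\<lparr>col := Dir j\<rparr>) None"
| follower_move:
    "\<lbrakk>st r = Follower; pp r = Some j; S (ports (pos r) ! j) = {}; rcd r = Dir d; col r = Dir j;
      succ_confirmed ports S r\<rbrakk>
     \<Longrightarrow> block_rule ports S r (r\<lparr>col := Mov\<rparr>) (Some j)"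
| follower_promote:
    "\<lbrakk>st r = Follower; pp r = Some j; rcd r = DStuck; Off \<in> S (ports (pos r) ! j)\<rbrakk>
     \<Longrightarrow> block_rule ports S r (r\<lparr>st := Leader\<rparr>) None"

definition compute :: "('v \<Rightarrow> 'v list) \<Rightarrow> 'v snapshot \<Rightarrow> 'v robot \<Rightarrow> 'v robot \<Rightarrow> nat option \<Rightarrow> bool" where
  "compute ports S r r' mv \<longleftrightarrow>
     block_rule ports S r r' mv \<or>
     ((\<nexists>r'' mv'. block_rule ports S r r'' mv') \<and> r' = r \<and> mv = None)"

text \<open>Arrival after moving through port k: the successor is behind (the
  vertex just left); a Follower's predecessor is in its recorded direction.\<close>
definition arrive :: "('v \<Rightarrow> 'v list) \<Rightarrow> 'v robot \<Rightarrow> nat \<Rightarrow> 'v robot" where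
  "arrive ports r k =
     (let u = pos r; w = ports u ! k in
      r\<lparr>pos := w, sp := Some (port_of ports w u),
        pp := (case rcd r of Dir d \<Rightarrow> if st r = Follower then Some d else pp r | _ \<Rightarrow> pp r),
        rcd := Off\<rparr>)"

text \<open>One atomic event of an ASYNC execution: a Look (instantaneous
  snapshot), the end of a Compute (new state and light become visible), the
  end of a Move (robot arrives at the neighbour; if it left the Door a new
  robot is immediately placed there).  Arbitrary interleavings of these
  events model arbitrary finite activation delays and phase durations.\<close>
inductive astep :: "('v \<Rightarrow> 'v list) \<Rightarrow> 'v \<Rightarrow> 'v config \<Rightarrow> 'v config \<Rightarrow> bool"
  for ports :: "'v \<Rightarrow> 'v list" and door :: 'v where
  look:
    "\<lbrakk>i < nr c; ph c i = Idle\<rbrakk>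
     \<Longrightarrow> astep ports door c (c\<lparr>ph := (ph c)(i := Looked (view ports c (pos (rob c i))))\<rparr>)"
| comp:
    "\<lbrakk>i < nr c; ph c i = Looked S; compute ports S (rob c i) r' mv\<rbrakk>
     \<Longrightarrow> astep ports door c (c\<lparr>rob := (rob c)(i := r'),
                              ph := (ph c)(i := (case mv of None \<Rightarrow> Idle | Some k \<Rightarrow> Moving k))\<rparr>)"
| move:
    "\<lbrakk>i < nr c; ph c i = Moving k; pos (rob c i) \<noteq> door\<rbrakk>
     \<Longrightarrow> astep ports door c (c\<lparr>rob := (rob c)(i := arrive ports (rob c i) k),
                              ph := (ph c)(i := Idle)\<rparr>)"
| move_door:
    "\<lbrakk>i < nr c; ph c i = Moving k; pos (rob c i) = door\<rbrakk>
     \<Longrightarrow> astep ports door c (c\<lparr>nr := Suc (nr c),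
                              rob := (rob c)(i := arrive ports (rob c i) k, nr c := new_robot door),
                              ph := (ph c)(i := Idle, nr c := Idle)\<rparr>)"

definition execution :: "('v \<Rightarrow> 'v list) \<Rightarrow> 'v \<Rightarrow> (nat \<Rightarrow> 'v config) \<Rightarrow> bool" where
  "execution ports door e \<longleftrightarrow>
     e 0 = init_config door \<and> (\<forall>t. astep ports door (e t) (e (Suc t)) \<or> e (Suc t) = e t)"

definition leaders :: "'v config \<Rightarrow> nat set" where
  "leaders c = {i. i < nr c \<and> st (rob c i) = Leader}"

end

theory Submission
  imports Defs
begin

text \<open>Robots are numbered in the order in which they are placed at the Door, so robot
  \<open>i + 1\<close> is the successor of robot \<open>i\<close>.  The invariant \<open>block_inv\<close> says that the Finished
  robots form an initial segment of this numbering and that the robot just before a Leader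
  is Finished; uniqueness of the Leader is then immediate.  To make it inductive, the
  invariant also describes every pair \<open>(p, p + 1)\<close> of active robots: either \<open>p + 1\<close> is the
  newcomer still waiting at the Door, or it is a Follower whose predecessor port points at
  \<open>p\<close> (together with the stage of the direction handshake between the two), or at the vertex
  that \<open>p\<close> has just left, which is then unoccupied.  A Leader only targets vertices that are
  unoccupied and that no Follower is about to enter.  Since the model is asynchronous, a
  snapshot may be used long after it was taken; the invariant therefore also states what
  a pending snapshot still correctly tells a robot about its predecessor.\<close>

definition pred_vertex :: "('v \<Rightarrow> 'v list) \<Rightarrow> 'v config \<Rightarrow> nat \<Rightarrow> 'v" where
  "pred_vertex ports c i = ports (pos (rob c i)) ! the (pp (rob c i))"

definition succ_vertex :: "('v \<Rightarrow> 'v list) \<Rightarrow> 'v config \<Rightarrow> nat \<Rightarrow> 'v" where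
  "succ_vertex ports c i = ports (pos (rob c i)) ! the (sp (rob c i))"

definition unoccupied :: "'v config \<Rightarrow> 'v \<Rightarrow> bool" where
  "unoccupied c x \<longleftrightarrow> (\<forall>j<nr c. pos (rob c j) \<noteq> x)"

definition unclaimed :: "('v \<Rightarrow> 'v list) \<Rightarrow> 'v config \<Rightarrow> 'v \<Rightarrow> bool" where
  "unclaimed ports c t \<longleftrightarrow>
     unoccupied c t \<and> (\<forall>j<nr c. st (rob c j) = Follower \<longrightarrow> pred_vertex ports c j \<noteq> t)"

definition no_confirm :: "'v snapshot \<Rightarrow> 'v \<Rightarrow> bool" where
  "no_confirm S x \<longleftrightarrow> S x \<inter> {Conf, Conf2} = {}"

definition not_moving :: "'v config \<Rightarrow> nat \<Rightarrow> bool" where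
  "not_moving c i \<longleftrightarrow> (\<forall>k. ph c i \<noteq> Moving k)"

definition pred_view_sound :: "('v \<Rightarrow> 'v list) \<Rightarrow> 'v config \<Rightarrow> nat \<Rightarrow> 'v snapshot \<Rightarrow> bool" where
  "pred_view_sound ports c i S \<longleftrightarrow>
    (\<forall>x\<in>S (pred_vertex ports c i). is_dir x \<and> x \<noteq> rcd (rob c i) \<longrightarrow>
        pos (rob c (i - 1)) = pred_vertex ports c i \<and> col (rob c (i - 1)) = x) \<and>
    (S (pred_vertex ports c i) = {} \<longrightarrow> pred_vertex ports c i \<noteq> pos (rob c (i - 1))) \<and>
    (rcd (rob c i) = DStuck \<and> Off \<in> S (pred_vertex ports c i) \<longrightarrow> st (rob c (i - 1)) = Finished)"

definition leader_inv :: "('v \<Rightarrow> 'v list) \<Rightarrow> 'v config \<Rightarrow> nat \<Rightarrow> bool" where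
  "leader_inv ports c i \<longleftrightarrow>
    (i \<noteq> 0 \<longrightarrow> st (rob c (i - 1)) = Finished) \<and>
    (\<forall>k. col (rob c i) = Dir k \<longrightarrow>
        k < length (ports (pos (rob c i))) \<and> unclaimed ports c (ports (pos (rob c i)) ! k)) \<and>
    (\<forall>k. ph c i = Moving k \<longrightarrow> unclaimed ports c (ports (pos (rob c i)) ! k)) \<and>
    (\<forall>S. ph c i = Looked S \<longrightarrow>
        (\<forall>k. \<not> is_dir (col (rob c i)) \<and> free_port ports S (pos (rob c i)) k \<longrightarrow>
            unclaimed ports c (ports (pos (rob c i)) ! k)) \<and>
        (\<forall>k. col (rob c i) = Dir k \<longrightarrow> S (ports (pos (rob c i)) ! k) = {}))"

definition follower_wf :: "('v \<Rightarrow> 'v list) \<Rightarrow> 'v config \<Rightarrow> nat \<Rightarrow> bool" where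
  "follower_wf ports c i \<longleftrightarrow>
     st (rob c i) = Follower \<and> (\<exists>j. pp (rob c i) = Some j \<and> j < length (ports (pos (rob c i))))"

definition newcomer_next :: "('v \<Rightarrow> 'v list) \<Rightarrow> 'v \<Rightarrow> 'v config \<Rightarrow> nat \<Rightarrow> bool" where
  "newcomer_next ports door c p \<longleftrightarrow>
     st (rob c (Suc p)) = SNone \<and> pos (rob c p) = ports door ! 0 \<and>
     succ_vertex ports c p = door \<and> not_moving c p \<and> (\<forall>S. ph c p = Looked S \<longrightarrow> no_confirm S door)"

text \<open>The three stages of the handshake between an adjacent robot \<open>p\<close> and its successor:
  nothing recorded yet, direction recorded and confirmed, \<open>p\<close> moving in that direction.\<close>

definition handshake_idle :: "('v \<Rightarrow> 'v list) \<Rightarrow> 'v config \<Rightarrow> nat \<Rightarrow> bool" where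
  "handshake_idle ports c p \<longleftrightarrow>
     rcd (rob c (Suc p)) = Off \<and> col (rob c (Suc p)) \<in> {Off, Mov} \<and> not_moving c p \<and>
     (\<forall>S. ph c p = Looked S \<longrightarrow> no_confirm S (pos (rob c (Suc p))))"

definition handshake_confirmed :: "'v config \<Rightarrow> nat \<Rightarrow> bool" where
  "handshake_confirmed c p \<longleftrightarrow>
     is_dir (col (rob c p)) \<and> rcd (rob c (Suc p)) = col (rob c p) \<and> col (rob c (Suc p)) \<in> {Conf,
       Conf2}"

definition handshake_moving :: "'v config \<Rightarrow> nat \<Rightarrow> bool" where
  "handshake_moving c p \<longleftrightarrow>
     (\<exists>k. ph c p = Moving k \<and> rcd (rob c (Suc p)) = Dir k \<and> col (rob c (Suc p)) \<in> {Conf, Conf2})"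

definition pair_adjacent :: "('v \<Rightarrow> 'v list) \<Rightarrow> 'v config \<Rightarrow> nat \<Rightarrow> bool" where
  "pair_adjacent ports c p \<longleftrightarrow>
     pred_vertex ports c (Suc p) = pos (rob c p) \<and> succ_vertex ports c p = pos (rob c (Suc p)) \<and>
     not_moving c (Suc p) \<and>
       (handshake_idle ports c p \<or> handshake_confirmed c p \<or> handshake_moving c p)"

definition pair_gap :: "('v \<Rightarrow> 'v list) \<Rightarrow> 'v config \<Rightarrow> nat \<Rightarrow> bool" where
  "pair_gap ports c p \<longleftrightarrow> (let i = Suc p; a = pred_vertex ports c i in
     unoccupied c a \<and> succ_vertex ports c p = a \<and>
     (\<exists>d. rcd (rob c i) = Dir d \<and> d < length (ports a) \<and> ports a ! d = pos (rob c p)) \<and>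
     (col (rob c i) \<in> {Conf, Conf2} \<or> col (rob c i) = Dir (the (pp (rob c i))) \<or>
        (col (rob c i) = Mov \<and> ph c i = Moving (the (pp (rob c i))))) \<and>
     not_moving c p \<and> (\<forall>S. ph c p = Looked S \<longrightarrow> no_confirm S a) \<and>
     (\<forall>k. ph c i = Moving k \<longrightarrow> k = the (pp (rob c i))))"

definition pair_inv :: "('v \<Rightarrow> 'v list) \<Rightarrow> 'v \<Rightarrow> 'v config \<Rightarrow> nat \<Rightarrow> bool" where
  "pair_inv ports door c p \<longleftrightarrow>
     (\<exists>s. sp (rob c p) = Some s \<and> s < length (ports (pos (rob c p)))) \<and>
     (newcomer_next ports door c p \<or>
      (follower_wf ports c (Suc p) \<and> (pair_adjacent ports c p \<or> pair_gap ports c p)))"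

definition finished_next_inv :: "('v \<Rightarrow> 'v list) \<Rightarrow> 'v config \<Rightarrow> nat \<Rightarrow> bool" where
  "finished_next_inv ports c p \<longleftrightarrow>
     st (rob c (Suc p)) = Leader \<or> st (rob c (Suc p)) = Finished \<or>
     (follower_wf ports c (Suc p) \<and> rcd (rob c (Suc p)) = DStuck \<and>
      pred_vertex ports c (Suc p) = pos (rob c p) \<and>
      col (rob c (Suc p)) \<in> {Conf, Conf2} \<and> not_moving c (Suc p))"

definition block_inv :: "'v set \<Rightarrow> ('v \<Rightarrow> 'v list) \<Rightarrow> 'v \<Rightarrow> 'v config \<Rightarrow> bool" where
  "block_inv V ports door c \<longleftrightarrow>
     nr c \<ge> 1 \<and> pos (rob c (nr c - 1)) = door \<and>
     (\<forall>i<nr c. \<forall>j<nr c. pos (rob c i) = pos (rob c j) \<longrightarrow> i = j) \<and>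
     (\<forall>i<nr c. pos (rob c i) \<in> V) \<and>
     (\<forall>i k. i < nr c \<longrightarrow> ph c i = Moving k \<longrightarrow> col (rob c i) = Mov \<and> k < length (ports (pos (rob c i))))
       \<and>
     (\<forall>i<nr c. st (rob c i) = Finished \<longrightarrow> col (rob c i) = Off \<and> not_moving c i \<and>
        (\<forall>j<i. st (rob c j) = Finished) \<and> (Suc i < nr c \<longrightarrow> finished_next_inv ports c i)) \<and>
     (\<forall>i<nr c. st (rob c i) = SNone \<longrightarrow> Suc i = nr c \<and> col (rob c i) = Off \<and> not_moving c i \<and>
        (\<forall>S. ph c i = Looked S \<longrightarrow> (i = 0 \<longleftrightarrow> S (ports door ! 0) = {}))) \<and>
     (\<forall>i<nr c. st (rob c i) = Follower \<longrightarrow>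
        i \<noteq> 0 \<and> (\<forall>S. ph c i = Looked S \<longrightarrow> pred_view_sound ports c i S)) \<and>
     (\<forall>i<nr c. st (rob c i) = Leader \<longrightarrow> leader_inv ports c i) \<and>
     (\<forall>i. Suc i < nr c \<longrightarrow> st (rob c i) = Leader \<or> st (rob c i) = Follower \<longrightarrow> pair_inv ports door c i)
       \<and>
     (\<forall>i j. i < nr c \<longrightarrow> j < nr c \<longrightarrow> st (rob c i) = Follower \<longrightarrow> st (rob c j) = Follower \<longrightarrow>
        pred_vertex ports c i = pred_vertex ports c j \<longrightarrow> i = j)"

lemma port_graph_neighbour:
  assumes "port_graph V ports door Delta" "u \<in> V" "w \<in> set (ports u)"
  shows "w \<in> V" "u \<in> set (ports w)"
  using assms unfolding port_graph_def by blast+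

lemma port_graph_port_of:
  assumes "port_graph V ports door Delta" "u \<in> V" "w \<in> set (ports u)"
  shows "port_of ports w u < length (ports w)" "ports w ! port_of ports w u = u"
proof -
  have w: "w \<in> V" "u \<in> set (ports w)" using port_graph_neighbour[OF assms] by auto
  have d: "distinct (ports w)" using assms(1) w(1) unfolding port_graph_def by blast
  obtain j where j: "j < length (ports w)" "ports w ! j = u" using w(2) by (metis in_set_conv_nth)
  have "port_of ports w u = j"
    unfolding port_of_def
  proof (rule the_equality)
    show "j < length (ports w) \<and> ports w ! j = u" using j by simp
    fix j' assume "j' < length (ports w) \<and> ports w ! j' = u"
    then show "j' = j" using j d by (metis nth_eq_iff_index_eq)
  qed
  then show "port_of ports w u < length (ports w)" "ports w ! port_of ports w u = u" using j by auto
qed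

lemma port_graph_door:
  assumes "port_graph V ports door Delta"
  shows "length (ports door) = 1" "ports door ! 0 \<noteq> door" "door \<in> V"
proof -
  show l: "length (ports door) = 1" and dv: "door \<in> V" using assms unfolding port_graph_def
    by blast+
  have "door \<notin> set (ports door)" using assms dv unfolding port_graph_def by blast
  moreover have "ports door ! 0 \<in> set (ports door)" using l by simp
  ultimately show "ports door ! 0 \<noteq> door" by metis
qed

lemma within2_neighbour: "x \<in> set (ports u) \<Longrightarrow> within2 ports u x"
  unfolding within2_def by blast

lemma within2_neighbour2: "w \<in> set (ports u) \<Longrightarrow> x \<in> set (ports w) \<Longrightarrow> within2 ports u x"
  unfolding within2_def by blast

lemma view_within2: "within2 ports u x \<Longrightarrow> view ports c u x = lights_at c x"
  unfolding view_def by simp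

lemma lights_at_robot:
  assumes "\<forall>i<nr c. \<forall>j<nr c. pos (rob c i) = pos (rob c j) \<longrightarrow> i = j" "i < nr c"
  shows "lights_at c (pos (rob c i)) = {col (rob c i)}"
  using assms unfolding lights_at_def by auto

lemma unoccupied_iff_no_lights: "unoccupied c x \<longleftrightarrow> lights_at c x = {}"
  unfolding lights_at_def unoccupied_def by auto

lemma no_confirm_robot:
  assumes "\<forall>i<nr c. \<forall>j<nr c. pos (rob c i) = pos (rob c j) \<longrightarrow> i = j" "i < nr c"
    "within2 ports u (pos (rob c i))" "col (rob c i) \<notin> {Conf, Conf2}"
  shows "no_confirm (view ports c u) (pos (rob c i))"
  using assms by (simp add: no_confirm_def view_within2 lights_at_robot)

lemma no_confirm_unoccupied:
  assumes "unoccupied c x"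
  shows "no_confirm (view ports c u) x"
  using assms by (simp add: no_confirm_def view_def unoccupied_iff_no_lights)

lemma block_invD:
  assumes "block_inv V ports door c"
  shows block_inv_nr: "nr c \<ge> 1"
    and block_inv_door: "pos (rob c (nr c - 1)) = door"
    and block_inv_inj: "\<forall>i<nr c. \<forall>j<nr c. pos (rob c i) = pos (rob c j) \<longrightarrow> i = j"
    and block_inv_V: "\<And>i. i < nr c \<Longrightarrow> pos (rob c i) \<in> V"
    and block_inv_moving: "\<And>i k. i < nr c \<Longrightarrow> ph c i = Moving k \<Longrightarrow>
        col (rob c i) = Mov \<and> k < length (ports (pos (rob c i)))"
    and block_inv_finished: "\<And>i. i < nr c \<Longrightarrow> st (rob c i) = Finished \<Longrightarrow>
        col (rob c i) = Off \<and> not_moving c i \<and>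
        (\<forall>j<i. st (rob c j) = Finished) \<and> (Suc i < nr c \<longrightarrow> finished_next_inv ports c i)"
    and block_inv_newcomer: "\<And>i. i < nr c \<Longrightarrow> st (rob c i) = SNone \<Longrightarrow>
        Suc i = nr c \<and> col (rob c i) = Off \<and> not_moving c i \<and>
        (\<forall>S. ph c i = Looked S \<longrightarrow> (i = 0 \<longleftrightarrow> S (ports door ! 0) = {}))"
    and block_inv_follower: "\<And>i. i < nr c \<Longrightarrow> st (rob c i) = Follower \<Longrightarrow>
        i \<noteq> 0 \<and> (\<forall>S. ph c i = Looked S \<longrightarrow> pred_view_sound ports c i S)"
    and block_inv_leader: "\<And>i. i < nr c \<Longrightarrow> st (rob c i) = Leader \<Longrightarrow> leader_inv ports c i"
    and block_inv_pair: "\<And>i. Suc i < nr c \<Longrightarrow> st (rob c i) = Leader \<or> st (rob c i) = Follower \<Longrightarrow>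
        pair_inv ports door c i"
    and block_inv_pred_inj: "\<And>i j. i < nr c \<Longrightarrow> j < nr c \<Longrightarrow> st (rob c i) = Follower \<Longrightarrow>
        st (rob c j) = Follower \<Longrightarrow> pred_vertex ports c i = pred_vertex ports c j \<Longrightarrow> i = j"
  using assms unfolding block_inv_def atomize_all atomize_imp atomize_conj
  by (elim conjE) (intro conjI; assumption)

lemma block_invI:
  assumes "nr c \<ge> 1"
    and "pos (rob c (nr c - 1)) = door"
    and "\<forall>i<nr c. \<forall>j<nr c. pos (rob c i) = pos (rob c j) \<longrightarrow> i = j"
    and "\<And>i. i < nr c \<Longrightarrow> pos (rob c i) \<in> V"
    and "\<And>i k. i < nr c \<Longrightarrow> ph c i = Moving k \<Longrightarrow> col (rob c i) = Mov \<and>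
        k < length (ports (pos (rob c i)))"
    and "\<And>i. i < nr c \<Longrightarrow> st (rob c i) = Finished \<Longrightarrow> col (rob c i) = Off \<and> not_moving c i \<and>
        (\<forall>j<i. st (rob c j) = Finished) \<and> (Suc i < nr c \<longrightarrow> finished_next_inv ports c i)"
    and "\<And>i. i < nr c \<Longrightarrow> st (rob c i) = SNone \<Longrightarrow> Suc i = nr c \<and> col (rob c i) = Off \<and> not_moving c i \<and>
        (\<forall>S. ph c i = Looked S \<longrightarrow> (i = 0 \<longleftrightarrow> S (ports door ! 0) = {}))"
    and "\<And>i. i < nr c \<Longrightarrow> st (rob c i) = Follower \<Longrightarrow>
        i \<noteq> 0 \<and> (\<forall>S. ph c i = Looked S \<longrightarrow> pred_view_sound ports c i S)"
    and "\<And>i. i < nr c \<Longrightarrow> st (rob c i) = Leader \<Longrightarrow> leader_inv ports c i"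
    and "\<And>i. Suc i < nr c \<Longrightarrow> st (rob c i) = Leader \<or> st (rob c i) = Follower \<Longrightarrow>
        pair_inv ports door c i"
    and "\<And>i j. i < nr c \<Longrightarrow> j < nr c \<Longrightarrow> st (rob c i) = Follower \<Longrightarrow> st (rob c j) = Follower \<Longrightarrow>
        pred_vertex ports c i = pred_vertex ports c j \<Longrightarrow> i = j"
  shows "block_inv V ports door c"
  unfolding block_inv_def
  by (intro conjI; (rule assms | (intro allI impI; rule assms; assumption)))

lemma block_inv_init:
  assumes "port_graph V ports door Delta"
  shows "block_inv V ports door (init_config door)"
proof (rule block_invI)
  show "\<And>i. i < nr (init_config door) \<Longrightarrow> pos (rob (init_config door) i) \<in> V"
    using port_graph_door(3)[OF assms] by (simp add: init_config_def new_robot_def)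
qed (simp_all add: init_config_def new_robot_def not_moving_def)

lemma block_inv_leaders_unique:
  assumes I: "block_inv V ports door c"
    and "i < nr c" "j < nr c" "st (rob c i) = Leader" "st (rob c j) = Leader"
  shows "i = j"
proof -
  have "a = b" if "b < nr c" "st (rob c a) = Leader" "st (rob c b) = Leader" "a \<le> b" for a b
  proof (rule ccontr)
    assume "a \<noteq> b"
    then have "st (rob c (b - 1)) = Finished"
      using block_inv_leader[OF I that(1,3)] that(4) by (simp add: leader_inv_def)
    then have "st (rob c a) = Finished"
      using block_inv_finished[OF I, of "b - 1"] that \<open>a \<noteq> b\<close> by (cases "a = b - 1") auto
    then show False using that(2) by simp
  qed
  then show ?thesis using assms by (metis nat_le_linear)
qed

lemma block_inv_card_leaders: "block_inv V ports door c \<Longrightarrow> card (leaders c) \<le> 1"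
  using block_inv_leaders_unique unfolding leaders_def by (auto simp: card_le_Suc0_iff_eq)



lemma follower_cases:
  assumes I: "block_inv V ports door c" and i: "i < nr c" "st (rob c i) = Follower"
  shows "i \<noteq> 0 \<and> follower_wf ports c i \<and>
    ((st (rob c (i - 1)) = Finished \<and> rcd (rob c i) = DStuck \<and>
        pred_vertex ports c i = pos (rob c (i - 1)) \<and>
        col (rob c i) \<in> {Conf, Conf2} \<and> not_moving c i)
     \<or> ((st (rob c (i - 1)) = Leader \<or> st (rob c (i - 1)) = Follower) \<and>
        pair_inv ports door c (i - 1) \<and>
        (pair_adjacent ports c (i - 1) \<or> pair_gap ports c (i - 1))))"
proof -
  have i0: "i \<noteq> 0" using block_inv_follower[OF I i] by simp
  then have si: "Suc (i - 1) = i" by simp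
  have lt: "i - 1 < nr c" using i by simp
  show ?thesis
  proof (cases "st (rob c (i - 1))")
    case SNone
    then show ?thesis using block_inv_newcomer[OF I lt] i si by simp
  next
    case Finished
    then have "finished_next_inv ports c (i - 1)" using block_inv_finished[OF I lt] i si by simp
    then show ?thesis using i0 i Finished unfolding finished_next_inv_def si by auto
  next
    case Leader
    then have "pair_inv ports door c (i - 1)" using block_inv_pair[OF I] i si by simp
    then show ?thesis using i0 i Leader unfolding pair_inv_def newcomer_next_def si by auto
  next
    case Follower
    then have "pair_inv ports door c (i - 1)" using block_inv_pair[OF I] i si by simp
    then show ?thesis using i0 i Follower unfolding pair_inv_def newcomer_next_def si by auto
  qed
qed

lemma pred_vertex_neighbour:
  assumes "follower_wf ports c i"
  shows "pred_vertex ports c i \<in> set (ports (pos (rob c i)))"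
  using assms unfolding follower_wf_def pred_vertex_def by auto

lemma succ_vertex_neighbour:
  assumes "sp (rob c p) = Some s" "s < length (ports (pos (rob c p)))"
  shows "succ_vertex ports c p \<in> set (ports (pos (rob c p)))"
  using assms unfolding succ_vertex_def by auto

lemma look_pred_view_sound:
  assumes I: "block_inv V ports door c" and i: "i < nr c" "st (rob c i) = Follower"
  shows "pred_view_sound ports c i (view ports c (pos (rob c i)))"
proof -
  note fc = follower_cases[OF I i]
  have inj: "\<forall>i<nr c. \<forall>j<nr c. pos (rob c i) = pos (rob c j) \<longrightarrow> i = j" using block_inv_inj[OF I] .
  have "within2 ports (pos (rob c i)) (pred_vertex ports c i)"
    using pred_vertex_neighbour fc within2_neighbour by metis
  then have S: "view ports c (pos (rob c i)) (pred_vertex ports c i) = lights_at c (pred_vertex ports c i)"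
    by (rule view_within2)
  have lt: "i - 1 < nr c" using i by simp
  show ?thesis
  proof (cases "pred_vertex ports c i = pos (rob c (i - 1))")
    case True
    then have L: "lights_at c (pred_vertex ports c i) = {col (rob c (i - 1))}"
      using lights_at_robot[OF inj lt] by simp
    have nd: "rcd (rob c i) = DStuck \<Longrightarrow> col (rob c (i - 1)) = Off \<Longrightarrow> st (rob c (i - 1)) = Finished"
    proof -
      assume a: "rcd (rob c i) = DStuck" "col (rob c (i - 1)) = Off"
      from fc have "st (rob c (i - 1)) = Finished \<or> pair_adjacent ports c (i - 1) \<or>
          pair_gap ports c (i - 1)" by blast
      moreover have "\<not> pair_gap ports c (i - 1)" using True lt
        unfolding pair_gap_def unoccupied_def Let_def
        using i(1) by (metis One_nat_def Suc_pred' not_gr_zero fc)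
      moreover have "\<not> pair_adjacent ports c (i - 1)" using a fc
        unfolding pair_adjacent_def handshake_idle_def handshake_confirmed_def handshake_moving_def
        by (auto simp: is_dir_def)
      ultimately show ?thesis by blast
    qed
    show ?thesis unfolding pred_view_sound_def S L using True nd by (auto simp: is_dir_def)
  next
    case False
    then have "pair_gap ports c (i - 1)" using fc unfolding pair_adjacent_def by auto
    then have "unoccupied c (pred_vertex ports c i)" using fc unfolding pair_gap_def Let_def by auto
    then have "lights_at c (pred_vertex ports c i) = {}" by (simp add: unoccupied_iff_no_lights)
    then show ?thesis unfolding pred_view_sound_def S using False by auto
  qed
qed

lemma newcomer_at_door:
  assumes "block_inv V ports door c" "i < nr c" "st (rob c i) = SNone"
  shows "pos (rob c i) = door"
  using block_inv_newcomer[OF assms] block_inv_door[OF assms(1)] by (metis diff_Suc_1)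

lemma newcomer_pred:
  assumes I: "block_inv V ports door c" and i: "i < nr c" "st (rob c i) = SNone" "i \<noteq> 0"
  shows "(st (rob c (i - 1)) = Leader \<or> st (rob c (i - 1)) = Follower) \<and>
    pair_inv ports door c (i - 1) \<and> newcomer_next ports door c (i - 1)"
proof -
  have si: "Suc (i - 1) = i" and lt: "i - 1 < nr c" using i by auto
  have active: "st (rob c (i - 1)) = Leader \<or> st (rob c (i - 1)) = Follower"
  proof (cases "st (rob c (i - 1))")
    case SNone
    then show ?thesis using block_inv_newcomer[OF I lt] block_inv_newcomer[OF I i(1,2)] si by simp
  next
    case Finished
    then have "finished_next_inv ports c (i - 1)" using block_inv_finished[OF I lt] i si by simp
    then show ?thesis using i(2) si unfolding finished_next_inv_def follower_wf_def by simp
  qed simp_all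
  moreover have "pair_inv ports door c (i - 1)" using block_inv_pair[OF I, of "i - 1"] i si active by simp
  ultimately show ?thesis using i(2) si unfolding pair_inv_def follower_wf_def by auto
qed

lemma look_newcomer:
  assumes pg: "port_graph V ports door Delta" and I: "block_inv V ports door c"
    and i: "i < nr c" "st (rob c i) = SNone"
  shows "i = 0 \<longleftrightarrow> view ports c (pos (rob c i)) (ports door ! 0) = {}"
proof -
  have n: "Suc i = nr c" using block_inv_newcomer[OF I i] by simp
  have pd: "pos (rob c i) = door" using newcomer_at_door[OF I i] .
  have w: "within2 ports door (ports door ! 0)" using port_graph_door(1)[OF pg]
    by (intro within2_neighbour) simp
  have S: "view ports c (pos (rob c i)) (ports door ! 0) = lights_at c (ports door ! 0)"
    unfolding pd using view_within2[OF w] .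
  show ?thesis
  proof
    assume "i = 0"
    then have "nr c = 1" using n by simp
    then have "unoccupied c (ports door ! 0)" unfolding unoccupied_def
      using pd \<open>i = 0\<close> port_graph_door(2)[OF pg] by auto
    then show "view ports c (pos (rob c i)) (ports door ! 0) = {}" unfolding S
      by (simp add: unoccupied_iff_no_lights)
  next
    assume v: "view ports c (pos (rob c i)) (ports door ! 0) = {}"
    show "i = 0"
    proof (rule ccontr)
      assume "i \<noteq> 0"
      then have "pos (rob c (i - 1)) = ports door ! 0" "i - 1 < nr c"
        using newcomer_pred[OF I i] i(1) unfolding newcomer_next_def by auto
      then have "\<not> unoccupied c (ports door ! 0)" unfolding unoccupied_def by blast
      then show False using v unfolding S by (simp add: unoccupied_iff_no_lights)
    qed
  qed
qed

lemma pair_gap_col: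
  assumes "pair_gap ports c p"
  shows "col (rob c (Suc p)) \<noteq> Off \<and> col (rob c (Suc p)) \<noteq> DStuck"
  using assms unfolding pair_gap_def Let_def by auto

lemma look_free_port_unclaimed:
  assumes pg: "port_graph V ports door Delta" and I: "block_inv V ports door c"
    and r: "r < nr c" "st (rob c r) = Leader"
    and fp: "free_port ports (view ports c (pos (rob c r))) (pos (rob c r)) k"
  shows "unclaimed ports c (ports (pos (rob c r)) ! k)"
proof -
  let ?u = "pos (rob c r)"
  let ?t = "ports ?u ! k"
  let ?S = "view ports c ?u"
  have inj: "\<forall>i<nr c. \<forall>j<nr c. pos (rob c i) = pos (rob c j) \<longrightarrow> i = j" using block_inv_inj[OF I] .
  have k: "k < length (ports ?u)" and St: "?S ?t = {}"
    and blk: "\<forall>w\<in>set (ports ?t). w \<noteq> ?u \<longrightarrow> (\<forall>x\<in>?S w. x = Off \<or> x = DStuck)"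
    using fp unfolding free_port_def by auto
  have tin: "?t \<in> set (ports ?u)" using k by simp
  have "lights_at c ?t = {}" using St view_within2[OF within2_neighbour[where ports=ports, OF tin]]
    by simp
  then have E: "unoccupied c ?t" by (simp add: unoccupied_iff_no_lights)
  have "pred_vertex ports c j \<noteq> ?t" if j: "j < nr c" "st (rob c j) = Follower" for j
  proof
    assume eq: "pred_vertex ports c j = ?t"
    note fc = follower_cases[OF I j]
    have lt: "j - 1 < nr c" using j by simp
    have "pred_vertex ports c j \<noteq> pos (rob c (j - 1))" using E eq lt unfolding unoccupied_def
      by auto
    then have g: "pair_gap ports c (j - 1)" using fc unfolding pair_adjacent_def by auto
    have sj: "Suc (j - 1) = j" using fc by simp
    have cj: "col (rob c j) \<noteq> Off \<and> col (rob c j) \<noteq> DStuck" using pair_gap_col[OF g] sj by simp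
    have pj: "pos (rob c j) \<in> V" using block_inv_V[OF I j(1)] .
    have "pred_vertex ports c j \<in> set (ports (pos (rob c j)))" using pred_vertex_neighbour fc
      by blast
    then have jt: "pos (rob c j) \<in> set (ports ?t)" using port_graph_neighbour(2)[OF pg pj] eq
      by simp
    have jne: "pos (rob c j) \<noteq> ?u" using inj j r by auto
    have w2: "within2 ports ?u (pos (rob c j))"
      using within2_neighbour2[where ports=ports, OF tin jt] .
    have "?S (pos (rob c j)) = {col (rob c j)}"
      using view_within2[OF w2] lights_at_robot[OF inj j(1)] by simp
    then show False using blk jt jne cj by auto
  qed
  then show ?thesis unfolding unclaimed_def using E by blast
qed

lemma look_target_empty:
  assumes I: "block_inv V ports door c" and r: "r < nr c" "st (rob c r) = Leader"
    and d: "col (rob c r) = Dir k"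
  shows "view ports c (pos (rob c r)) (ports (pos (rob c r)) ! k) = {}"
proof -
  have "unclaimed ports c (ports (pos (rob c r)) ! k)" using block_inv_leader[OF I r] d
    unfolding leader_inv_def by blast
  then have "lights_at c (ports (pos (rob c r)) ! k) = {}" unfolding unclaimed_def
    by (simp add: unoccupied_iff_no_lights)
  then show ?thesis unfolding view_def by simp
qed

lemma finished_next_inv_cong:
  assumes "rob c' = rob c" "\<forall>i. not_moving c' i = not_moving c i"
  shows "finished_next_inv ports c' p = finished_next_inv ports c p"
  using assms unfolding finished_next_inv_def follower_wf_def pred_vertex_def by simp

lemma pair_inv_cong_phase:
  assumes "rob c' = rob c" "nr c' = nr c" "ph c' p = ph c p"
    "\<forall>k. (ph c' (Suc p) = Moving k) = (ph c (Suc p) = Moving k)"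
  shows "pair_inv ports door c' p = pair_inv ports door c p"
  using assms
    unfolding pair_inv_def newcomer_next_def follower_wf_def pair_adjacent_def pair_gap_def
      handshake_idle_def handshake_confirmed_def handshake_moving_def
    not_moving_def pred_vertex_def succ_vertex_def unoccupied_def Let_def by simp

lemma look_no_confirm:
  assumes I: "block_inv V ports door c" and p: "Suc p < nr c" "pair_inv ports door c p"
  shows "newcomer_next ports door c p \<Longrightarrow> no_confirm (view ports c (pos (rob c p))) door"
    and "pair_adjacent ports c p \<Longrightarrow> handshake_idle ports c p \<Longrightarrow>
      no_confirm (view ports c (pos (rob c p))) (pos (rob c (Suc p)))"
    and "pair_gap ports c p \<Longrightarrow> no_confirm (view ports c (pos (rob c p))) (pred_vertex ports c (Suc p))"
proof -
  note inj = block_inv_inj[OF I]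
  obtain s where "sp (rob c p) = Some s" "s < length (ports (pos (rob c p)))"
    using p(2) unfolding pair_inv_def by blast
  then have w: "within2 ports (pos (rob c p)) (succ_vertex ports c p)"
    by (intro within2_neighbour succ_vertex_neighbour)
  show "no_confirm (view ports c (pos (rob c p))) door" if "newcomer_next ports door c p"
  proof -
    have sn: "st (rob c (Suc p)) = SNone" "succ_vertex ports c p = door"
      using that unfolding newcomer_next_def by auto
    have "pos (rob c (Suc p)) = door" using newcomer_at_door[OF I p(1) sn(1)] .
    moreover have "col (rob c (Suc p)) = Off" using block_inv_newcomer[OF I p(1) sn(1)] by simp
    ultimately show ?thesis using no_confirm_robot[OF inj p(1), of ports "pos (rob c p)"] w sn
      by simp
  qed
  show "no_confirm (view ports c (pos (rob c p))) (pos (rob c (Suc p)))"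
    if "pair_adjacent ports c p" "handshake_idle ports c p"
  proof -
    have "succ_vertex ports c p = pos (rob c (Suc p))" "col (rob c (Suc p)) \<in> {Off, Mov}"
      using that unfolding pair_adjacent_def handshake_idle_def by auto
    then show ?thesis using no_confirm_robot[OF inj p(1)] w by auto
  qed
  show "no_confirm (view ports c (pos (rob c p))) (pred_vertex ports c (Suc p))"
    if "pair_gap ports c p"
    using that unfolding pair_gap_def Let_def by (blast intro: no_confirm_unoccupied)
qed

lemma look_pair_inv:
  assumes I: "block_inv V ports door c"
    and p: "Suc p < nr c" "pair_inv ports door c p" "ph c p = Idle"
    and c': "c' = c\<lparr>ph := (ph c)(p := Looked (view ports c (pos (rob c p))))\<rparr>"
  shows "pair_inv ports door c' p"
proof -
  note nc = look_no_confirm[OF I p(1,2)]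
  have E: "unoccupied c' = unoccupied c" "pred_vertex ports c' = pred_vertex ports c"
    "succ_vertex ports c' = succ_vertex ports c"
    using c' by (auto simp: unoccupied_def pred_vertex_def succ_vertex_def fun_eq_iff)
  have ph': "ph c' p = Looked (view ports c (pos (rob c p)))" "ph c' (Suc p) = ph c (Suc p)"
    and R: "rob c' = rob c" using c' by auto
  have nm: "not_moving c' p" "not_moving c p" using ph'(1) p(3) unfolding not_moving_def by auto
  have sp': "\<exists>s. sp (rob c' p) = Some s \<and> s < length (ports (pos (rob c' p)))"
    using p(2) R unfolding pair_inv_def by auto
  have fb: "follower_wf ports c' (Suc p) = follower_wf ports c (Suc p)"
    unfolding follower_wf_def R by simp
  consider "newcomer_next ports door c p" | "follower_wf ports c (Suc p)" "pair_adjacent ports c p"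
    | "follower_wf ports c (Suc p)" "pair_gap ports c p"
    using p(2) unfolding pair_inv_def by blast
  then show ?thesis
  proof cases
    case 1
    then have "newcomer_next ports door c' p" using nc(1)[OF 1] nm ph'(1) E R
      unfolding newcomer_next_def by auto
    then show ?thesis using sp' unfolding pair_inv_def by blast
  next
    case 2
    have "handshake_idle ports c p \<or> handshake_confirmed c p" using 2(2) p(3)
      unfolding pair_adjacent_def handshake_moving_def by auto
    then have "handshake_idle ports c' p \<or> handshake_confirmed c' p"
    proof
      assume "handshake_idle ports c p"
      then show ?thesis using nc(2)[OF 2(2)] nm ph'(1) R unfolding handshake_idle_def by auto
    qed (auto simp: handshake_confirmed_def R)
    then have "pair_adjacent ports c' p" using 2(2) E ph'(2) R
      unfolding pair_adjacent_def not_moving_def by auto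
    then show ?thesis using sp' fb 2(1) unfolding pair_inv_def by blast
  next
    case 3
    have "pair_gap ports c' p" using 3(2) nc(3)[OF 3(2)] E ph' R nm
      unfolding pair_gap_def Let_def by auto
    then show ?thesis using sp' fb 3(1) unfolding pair_inv_def by blast
  qed
qed

lemma leader_inv_mono:
  assumes "leader_inv ports c i" "rob c' i = rob c i" "i \<noteq> 0 \<Longrightarrow>
      st (rob c' (i - 1)) = st (rob c (i - 1))"
    "ph c' i = ph c i" "\<And>t. unclaimed ports c t \<Longrightarrow> unclaimed ports c' t"
  shows "leader_inv ports c' i"
  using assms unfolding leader_inv_def by (metis (no_types, lifting))

lemma pred_view_sound_cong:
  assumes "rob c' i = rob c i" "rob c' (i - 1) = rob c (i - 1)"
  shows "pred_view_sound ports c' i S = pred_view_sound ports c i S"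
  using assms unfolding pred_view_sound_def pred_vertex_def by simp

lemma finished_next_inv_cong_local:
  assumes "rob c' i = rob c i" "rob c' (Suc i) = rob c (Suc i)" "ph c' (Suc i) = ph c (Suc i)"
  shows "finished_next_inv ports c' i = finished_next_inv ports c i"
  using assms unfolding finished_next_inv_def follower_wf_def pred_vertex_def not_moving_def by simp

lemma pair_inv_cong_local:
  assumes "rob c' i = rob c i" "rob c' (Suc i) = rob c (Suc i)" "ph c' i = ph c i"
    "ph c' (Suc i) = ph c (Suc i)"
    "unoccupied c' = unoccupied c"
  shows "pair_inv ports door c' i = pair_inv ports door c i"
  using assms
    unfolding pair_inv_def newcomer_next_def follower_wf_def pair_adjacent_def pair_gap_def
      handshake_idle_def handshake_confirmed_def handshake_moving_def
    not_moving_def pred_vertex_def succ_vertex_def Let_def by simp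

lemma pred_view_sound_update_pred:
  assumes "pred_view_sound ports c i S" "rob c' i = rob c i"
    "pos (rob c' (i - 1)) = pos (rob c (i - 1))"
    "st (rob c (i - 1)) = Finished \<Longrightarrow> st (rob c' (i - 1)) = Finished"
    "is_dir (col (rob c (i - 1))) \<Longrightarrow> col (rob c (i - 1)) \<noteq> rcd (rob c i) \<Longrightarrow>
        col (rob c' (i - 1)) = col (rob c (i - 1))"
  shows "pred_view_sound ports c' i S"
  using assms unfolding pred_view_sound_def pred_vertex_def by metis

lemma pair_inv_update_idle:
  assumes "pair_inv ports door c p" "rob c' (Suc p) = rob c (Suc p)" "ph c' (Suc p) = ph c (Suc p)"
    "pos (rob c' p) = pos (rob c p)" "sp (rob c' p) = sp (rob c p)" "not_moving c p"
      "ph c' p = Idle"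
    "handshake_confirmed c p \<Longrightarrow> handshake_confirmed c' p" "unoccupied c' = unoccupied c"
  shows "pair_inv ports door c' p"
proof -
  have nm: "not_moving c' p" using assms(7) unfolding not_moving_def by simp
  have na2: "\<not> handshake_moving c p" using assms(6) unfolding handshake_moving_def not_moving_def
    by auto
  have E: "pred_vertex ports c' (Suc p) = pred_vertex ports c (Suc p)"
    "succ_vertex ports c' p = succ_vertex ports c p"
    using assms unfolding pred_vertex_def succ_vertex_def by auto
  have fb: "follower_wf ports c' (Suc p) = follower_wf ports c (Suc p)" using assms(2)
    unfolding follower_wf_def by simp
  have sp': "\<exists>s. sp (rob c' p) = Some s \<and> s < length (ports (pos (rob c' p)))"
    using assms(1,4,5) unfolding pair_inv_def by auto
  consider "newcomer_next ports door c p" | "follower_wf ports c (Suc p)" "pair_adjacent ports c p"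
    | "follower_wf ports c (Suc p)" "pair_gap ports c p"
    using assms(1) unfolding pair_inv_def by blast
  then show ?thesis
  proof cases
    case 1
    then have "newcomer_next ports door c' p" using nm assms E unfolding newcomer_next_def by auto
    then show ?thesis using sp' unfolding pair_inv_def by blast
  next
    case 2
    have "handshake_idle ports c p \<or> handshake_confirmed c p" using 2(2) na2
      unfolding pair_adjacent_def by auto
    then have "handshake_idle ports c' p \<or> handshake_confirmed c' p"
    proof
      assume "handshake_idle ports c p"
      then show ?thesis using nm assms unfolding handshake_idle_def by auto
    qed (use assms in auto)
    then have "pair_adjacent ports c' p" using 2(2) E assms
      unfolding pair_adjacent_def not_moving_def by auto
    then show ?thesis using sp' fb 2(1) unfolding pair_inv_def by blast
  next
    case 3
    have "pair_gap ports c' p" using 3(2) E nm assms unfolding pair_gap_def Let_def by auto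
    then show ?thesis using sp' fb 3(1) unfolding pair_inv_def by blast
  qed
qed

locale robot_update =
  fixes V :: "'v set" and ports :: "'v \<Rightarrow> 'v list" and door :: 'v
    and c c' :: "'v config" and r :: nat and r' :: "'v robot" and X :: "'v phase"
  assumes inv: "block_inv V ports door c"
    and r_lt: "r < nr c"
    and c'_eq: "c' = c\<lparr>rob := (rob c)(r := r'), ph := (ph c)(r := X)\<rparr>"
    and pos_kept: "pos r' = pos (rob c r)"
begin

lemma nr_eq [simp]: "nr c' = nr c"
  using c'_eq by simp

lemma rob_eq: "rob c' i = (if i = r then r' else rob c i)"
  and ph_eq: "ph c' i = (if i = r then X else ph c i)"
  using c'_eq by auto

lemma config_eq: "rob c' = (rob c)(r := r')" "ph c' = (ph c)(r := X)"
  using c'_eq by auto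

lemma pos_eq [simp]: "pos (rob c' i) = pos (rob c i)"
  using pos_kept by (simp add: rob_eq)

lemma unoccupied_eq: "unoccupied c' = unoccupied c"
  unfolding unoccupied_def fun_eq_iff by simp

lemma unclaimed_preserved:
  assumes "st r' = Follower \<Longrightarrow> st (rob c r) = Follower \<and> pp r' = pp (rob c r)"
    and "unclaimed ports c t"
  shows "unclaimed ports c' t"
  using assms pos_kept unfolding unclaimed_def unoccupied_def pred_vertex_def
  by (auto simp: rob_eq split: if_splits)

lemma pred_inj_preserved:
  assumes keep: "st r' = Follower \<Longrightarrow> st (rob c r) = Follower \<and> pp r' = pp (rob c r)"
    and "i < nr c'" "j < nr c'" "st (rob c' i) = Follower" "st (rob c' j) = Follower"
    and "pred_vertex ports c' i = pred_vertex ports c' j"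
  shows "i = j"
proof -
  have "pred_vertex ports c' x = pred_vertex ports c x" "st (rob c x) = Follower"
    if "st (rob c' x) = Follower" for x
    using keep pos_kept that unfolding pred_vertex_def by (auto simp: rob_eq split: if_splits)
  then show ?thesis using block_inv_pred_inj[OF inv] assms(2-6) by (metis nr_eq)
qed

lemma finished_clause:
  assumes hfin: "st (rob c r) = Finished \<Longrightarrow> st r' = Finished"
    and own: "st r' = Finished \<Longrightarrow> col r' = Off \<and> not_moving c' r \<and>
        (\<forall>j<r. st (rob c j) = Finished) \<and> (Suc r < nr c \<longrightarrow> finished_next_inv ports c' r)"
    and prev: "0 < r \<Longrightarrow> st (rob c (r - 1)) = Finished \<Longrightarrow> finished_next_inv ports c' (r - 1)"
    and i: "i < nr c'" "st (rob c' i) = Finished"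
  shows "col (rob c' i) = Off \<and> not_moving c' i \<and> (\<forall>j<i. st (rob c' j) = Finished) \<and>
    (Suc i < nr c' \<longrightarrow> finished_next_inv ports c' i)"
proof (cases "i = r")
  case True
  then show ?thesis using own i by (auto simp: rob_eq)
next
  case False
  then have i': "i < nr c" "st (rob c i) = Finished" using i by (auto simp: rob_eq)
  note F = block_inv_finished[OF inv i']
  have nm: "not_moving c' i" using F False unfolding not_moving_def by (auto simp: ph_eq)
  have pre: "\<forall>j<i. st (rob c' j) = Finished" using F hfin by (auto simp: rob_eq)
  have "finished_next_inv ports c' i" if si: "Suc i < nr c'"
  proof (cases "Suc i = r")
    case True
    then show ?thesis using prev i' by force
  next
    case False
    then show ?thesis using F finished_next_inv_cong_local[of c' i c ports] \<open>i \<noteq> r\<close> si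
      by (simp add: rob_eq ph_eq)
  qed
  then show ?thesis using F False nm pre by (simp add: rob_eq)
qed

lemma newcomer_clause:
  assumes own: "st r' = SNone \<Longrightarrow> Suc r = nr c \<and> col r' = Off \<and> not_moving c' r \<and>
        (\<forall>S. X = Looked S \<longrightarrow> (r = 0 \<longleftrightarrow> S (ports door ! 0) = {}))"
    and i: "i < nr c'" "st (rob c' i) = SNone"
  shows "Suc i = nr c' \<and> col (rob c' i) = Off \<and> not_moving c' i \<and>
    (\<forall>S. ph c' i = Looked S \<longrightarrow> (i = 0 \<longleftrightarrow> S (ports door ! 0) = {}))"
proof (cases "i = r")
  case True
  then show ?thesis using own i by (auto simp: rob_eq ph_eq)
next
  case False
  then have "i < nr c" "st (rob c i) = SNone" using i by (auto simp: rob_eq)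
  then show ?thesis using block_inv_newcomer[OF inv] False unfolding not_moving_def
    by (auto simp: rob_eq ph_eq)
qed

lemma follower_clause:
  assumes own: "st r' = Follower \<Longrightarrow> r \<noteq> 0 \<and> (\<forall>S. X = Looked S \<longrightarrow> pred_view_sound ports c' r S)"
    and next_view: "\<And>S. Suc r < nr c \<Longrightarrow> st (rob c (Suc r)) = Follower \<Longrightarrow> ph c (Suc r) = Looked S \<Longrightarrow>
        pred_view_sound ports c' (Suc r) S"
    and i: "i < nr c'" "st (rob c' i) = Follower"
  shows "i \<noteq> 0 \<and> (\<forall>S. ph c' i = Looked S \<longrightarrow> pred_view_sound ports c' i S)"
proof (cases "i = r")
  case True
  then show ?thesis using own i by (auto simp: rob_eq ph_eq)
next
  case False
  then have i': "i < nr c" "st (rob c i) = Follower" using i by (auto simp: rob_eq)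
  note F = block_inv_follower[OF inv i']
  show ?thesis
  proof (cases "i = Suc r")
    case True
    then show ?thesis using F next_view i' by (auto simp: ph_eq)
  next
    case False
    then have "i - 1 \<noteq> r" using F by auto
    then have "pred_view_sound ports c' i S = pred_view_sound ports c i S" for S
      using pred_view_sound_cong[of c' i c] \<open>i \<noteq> r\<close> by (simp add: rob_eq)
    then show ?thesis using F \<open>i \<noteq> r\<close> by (auto simp: ph_eq)
  qed
qed

lemma leader_clause:
  assumes unclaimed: "\<And>t. unclaimed ports c t \<Longrightarrow> unclaimed ports c' t"
    and own: "st r' = Leader \<Longrightarrow> leader_inv ports c' r"
    and next_leader: "Suc r < nr c \<Longrightarrow> st (rob c (Suc r)) = Leader \<Longrightarrow> leader_inv ports c' (Suc r)"
    and i: "i < nr c'" "st (rob c' i) = Leader"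
  shows "leader_inv ports c' i"
proof (cases "i = r")
  case True
  then show ?thesis using own i by (auto simp: rob_eq)
next
  case False
  then have i': "i < nr c" "st (rob c i) = Leader" using i by (auto simp: rob_eq)
  show ?thesis
  proof (cases "i = Suc r")
    case True
    then show ?thesis using next_leader i' by auto
  next
    case False
    then have "i - 1 \<noteq> r \<or> i = 0" by auto
    then show ?thesis
      using leader_inv_mono[OF block_inv_leader[OF inv i'], of c'] \<open>i \<noteq> r\<close> unclaimed
      by (auto simp: rob_eq ph_eq)
  qed
qed

lemma pair_clause:
  assumes own: "Suc r < nr c \<Longrightarrow> st r' = Leader \<or> st r' = Follower \<Longrightarrow> pair_inv ports door c' r"
    and prev: "0 < r \<Longrightarrow> st (rob c (r - 1)) = Leader \<or> st (rob c (r - 1)) = Follower \<Longrightarrow>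
        pair_inv ports door c' (r - 1)"
    and i: "Suc i < nr c'" "st (rob c' i) = Leader \<or> st (rob c' i) = Follower"
  shows "pair_inv ports door c' i"
proof (cases "i = r")
  case True
  then show ?thesis using own i by (auto simp: rob_eq)
next
  case False
  then have i': "Suc i < nr c" "st (rob c i) = Leader \<or> st (rob c i) = Follower"
    using i by (auto simp: rob_eq)
  show ?thesis
  proof (cases "Suc i = r")
    case True
    then show ?thesis using prev i' by force
  next
    case False
    then show ?thesis using block_inv_pair[OF inv i'] pair_inv_cong_local[of c' i c ports door]
      \<open>i \<noteq> r\<close> unoccupied_eq by (simp add: rob_eq ph_eq)
  qed
qed

text \<open>Only robot \<open>r\<close> and its neighbours \<open>r - 1\<close> and \<open>r + 1\<close> in the chain have to be
  re-examined; every other robot keeps its part of the invariant.\<close>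

theorem block_inv_preserved:
  assumes hfin: "st (rob c r) = Finished \<Longrightarrow> st r' = Finished"
    and unclaimed: "\<And>t. unclaimed ports c t \<Longrightarrow> unclaimed ports c' t"
    and pred_inj: "\<And>i j. i < nr c' \<Longrightarrow> j < nr c' \<Longrightarrow> st (rob c' i) = Follower \<Longrightarrow>
        st (rob c' j) = Follower \<Longrightarrow> pred_vertex ports c' i = pred_vertex ports c' j \<Longrightarrow> i = j"
    and moving: "\<And>k. X = Moving k \<Longrightarrow> col r' = Mov \<and> k < length (ports (pos r'))"
    and finished: "st r' = Finished \<Longrightarrow> col r' = Off \<and> not_moving c' r \<and>
        (\<forall>j<r. st (rob c j) = Finished) \<and> (Suc r < nr c \<longrightarrow> finished_next_inv ports c' r)"
    and newcomer: "st r' = SNone \<Longrightarrow> Suc r = nr c \<and> col r' = Off \<and> not_moving c' r \<and>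
        (\<forall>S. X = Looked S \<longrightarrow> (r = 0 \<longleftrightarrow> S (ports door ! 0) = {}))"
    and follower: "st r' = Follower \<Longrightarrow> r \<noteq> 0 \<and> (\<forall>S. X = Looked S \<longrightarrow> pred_view_sound ports c' r S)"
    and leader: "st r' = Leader \<Longrightarrow> leader_inv ports c' r"
    and pair: "Suc r < nr c \<Longrightarrow> st r' = Leader \<or> st r' = Follower \<Longrightarrow> pair_inv ports door c' r"
    and prev_pair: "0 < r \<Longrightarrow> st (rob c (r - 1)) = Leader \<or> st (rob c (r - 1)) = Follower \<Longrightarrow>
        pair_inv ports door c' (r - 1)"
    and prev_finished: "0 < r \<Longrightarrow> st (rob c (r - 1)) = Finished \<Longrightarrow> finished_next_inv ports c' (r - 1)"
    and next_view: "\<And>S. Suc r < nr c \<Longrightarrow> st (rob c (Suc r)) = Follower \<Longrightarrow> ph c (Suc r) = Looked S \<Longrightarrow>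
        pred_view_sound ports c' (Suc r) S"
    and next_leader: "Suc r < nr c \<Longrightarrow> st (rob c (Suc r)) = Leader \<Longrightarrow> leader_inv ports c' (Suc r)"
  shows "block_inv V ports door c'"
proof (rule block_invI)
  show "1 \<le> nr c'" using block_inv_nr[OF inv] by simp
  show "pos (rob c' (nr c' - 1)) = door" using block_inv_door[OF inv] by simp
  show "\<forall>i<nr c'. \<forall>j<nr c'. pos (rob c' i) = pos (rob c' j) \<longrightarrow> i = j"
    using block_inv_inj[OF inv] by simp
  show "\<And>i. i < nr c' \<Longrightarrow> pos (rob c' i) \<in> V" using block_inv_V[OF inv] by simp
  show "\<And>i k. i < nr c' \<Longrightarrow> ph c' i = Moving k \<Longrightarrow> col (rob c' i) = Mov \<and>
      k < length (ports (pos (rob c' i)))"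
    using block_inv_moving[OF inv] moving pos_kept by (auto simp: rob_eq ph_eq split: if_splits)
  show "\<And>i. i < nr c' \<Longrightarrow> st (rob c' i) = Finished \<Longrightarrow> col (rob c' i) = Off \<and> not_moving c' i \<and>
      (\<forall>j<i. st (rob c' j) = Finished) \<and> (Suc i < nr c' \<longrightarrow> finished_next_inv ports c' i)"
    by (rule finished_clause[OF hfin finished prev_finished])
  show "\<And>i. i < nr c' \<Longrightarrow> st (rob c' i) = SNone \<Longrightarrow> Suc i = nr c' \<and> col (rob c' i) = Off \<and>
      not_moving c' i \<and> (\<forall>S. ph c' i = Looked S \<longrightarrow> (i = 0 \<longleftrightarrow> S (ports door ! 0) = {}))"
    by (rule newcomer_clause[OF newcomer])
  show "\<And>i. i < nr c' \<Longrightarrow> st (rob c' i) = Follower \<Longrightarrow>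
      i \<noteq> 0 \<and> (\<forall>S. ph c' i = Looked S \<longrightarrow> pred_view_sound ports c' i S)"
    by (rule follower_clause[OF follower next_view])
  show "\<And>i. i < nr c' \<Longrightarrow> st (rob c' i) = Leader \<Longrightarrow> leader_inv ports c' i"
    by (rule leader_clause[OF unclaimed leader next_leader])
  show "\<And>i. Suc i < nr c' \<Longrightarrow> st (rob c' i) = Leader \<or> st (rob c' i) = Follower \<Longrightarrow>
      pair_inv ports door c' i"
    by (rule pair_clause[OF pair prev_pair])
qed (rule pred_inj)

corollary block_inv_preserved_keep:
  assumes "st (rob c r) = Finished \<Longrightarrow> st r' = Finished"
    and keep: "st r' = Follower \<Longrightarrow> st (rob c r) = Follower \<and> pp r' = pp (rob c r)"
    and "\<And>k. X = Moving k \<Longrightarrow> col r' = Mov \<and> k < length (ports (pos r'))"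
    and "st r' = Finished \<Longrightarrow> col r' = Off \<and> not_moving c' r \<and>
        (\<forall>j<r. st (rob c j) = Finished) \<and> (Suc r < nr c \<longrightarrow> finished_next_inv ports c' r)"
    and "st r' = SNone \<Longrightarrow> Suc r = nr c \<and> col r' = Off \<and> not_moving c' r \<and>
        (\<forall>S. X = Looked S \<longrightarrow> (r = 0 \<longleftrightarrow> S (ports door ! 0) = {}))"
    and "st r' = Follower \<Longrightarrow> r \<noteq> 0 \<and> (\<forall>S. X = Looked S \<longrightarrow> pred_view_sound ports c' r S)"
    and "st r' = Leader \<Longrightarrow> leader_inv ports c' r"
    and "Suc r < nr c \<Longrightarrow> st r' = Leader \<or> st r' = Follower \<Longrightarrow> pair_inv ports door c' r"
    and "0 < r \<Longrightarrow> st (rob c (r - 1)) = Leader \<or> st (rob c (r - 1)) = Follower \<Longrightarrow>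
        pair_inv ports door c' (r - 1)"
    and "0 < r \<Longrightarrow> st (rob c (r - 1)) = Finished \<Longrightarrow> finished_next_inv ports c' (r - 1)"
    and "\<And>S. Suc r < nr c \<Longrightarrow> st (rob c (Suc r)) = Follower \<Longrightarrow> ph c (Suc r) = Looked S \<Longrightarrow>
        pred_view_sound ports c' (Suc r) S"
    and "Suc r < nr c \<Longrightarrow> st (rob c (Suc r)) = Leader \<Longrightarrow> leader_inv ports c' (Suc r)"
  shows "block_inv V ports door c'"
  by (rule block_inv_preserved[OF assms(1) unclaimed_preserved[OF keep] pred_inj_preserved[OF keep]
        assms(3-)])

end

lemma confirmed_handshake:
  assumes I: "block_inv V ports door c"
    and p: "Suc p < nr c" "st (rob c p) = Leader \<or> st (rob c p) = Follower"
      "ph c p = Looked S" "succ_confirmed ports S (rob c p)"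
  shows "follower_wf ports c (Suc p) \<and> pair_adjacent ports c p \<and> handshake_confirmed c p"
proof -
  have P: "pair_inv ports door c p" using block_inv_pair[OF I p(1) p(2)] .
  then obtain s where s: "sp (rob c p) = Some s" unfolding pair_inv_def by blast
  have nc: "\<not> no_confirm S (succ_vertex ports c p)"
    using p(4) s unfolding succ_confirmed_def no_confirm_def succ_vertex_def by auto
  have ns: "\<not> newcomer_next ports door c p" using nc p(3) unfolding newcomer_next_def by auto
  have ng: "\<not> pair_gap ports c p" using nc p(3) unfolding pair_gap_def Let_def by auto
  have fa: "follower_wf ports c (Suc p)" "pair_adjacent ports c p" using P ns ng
    unfolding pair_inv_def by auto
  moreover have "\<not> handshake_idle ports c p"
    using nc p(3) fa(2) unfolding handshake_idle_def pair_adjacent_def by auto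
  moreover have "\<not> handshake_moving c p" using p(3) unfolding handshake_moving_def by auto
  ultimately show ?thesis unfolding pair_adjacent_def by blast
qed

lemma pred_vertex_occupied:
  assumes I: "block_inv V ports door c" and i: "i < nr c" "st (rob c i) = Follower"
    and j: "j < nr c" "pred_vertex ports c i = pos (rob c j)"
  shows "j = i - 1"
proof -
  note fc = follower_cases[OF I i]
  have si: "Suc (i - 1) = i" using fc by simp
  have "\<not> pair_gap ports c (i - 1)" using j si unfolding pair_gap_def Let_def unoccupied_def by auto
  then have "pred_vertex ports c i = pos (rob c (i - 1))" using fc unfolding pair_adjacent_def
    by auto
  then show ?thesis using block_inv_inj[OF I] j i by auto
qed

lemma follower_pred_gap:
  assumes I: "block_inv V ports door c"
    and r: "r < nr c" "ph c r = Looked S" "st (rob c r) = Follower"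
    "pp (rob c r) = Some j" "S (ports (pos (rob c r)) ! j) = {}"
  shows "r \<noteq> 0 \<and> follower_wf ports c r \<and>
    (st (rob c (r - 1)) = Leader \<or> st (rob c (r - 1)) = Follower) \<and>
    pair_inv ports door c (r - 1) \<and> pair_gap ports c (r - 1) \<and>
    pred_vertex ports c r = ports (pos (rob c r)) ! j"
proof -
  note fc = follower_cases[OF I r(1) r(3)]
  have pv: "pred_vertex ports c r = ports (pos (rob c r)) ! j" using r(4) unfolding pred_vertex_def
    by simp
  have "pred_vertex ports c r \<noteq> pos (rob c (r - 1))"
    using block_inv_follower[OF I r(1) r(3)] r(2,5) pv unfolding pred_view_sound_def by simp
  moreover from this have "\<not> pair_adjacent ports c (r - 1)" using fc unfolding pair_adjacent_def
    by auto
  ultimately show ?thesis using fc pv by auto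
qed

lemma follower_sees_new_direction:
  assumes I: "block_inv V ports door c"
    and r: "r < nr c" "ph c r = Looked S" "st (rob c r) = Follower" "pp (rob c r) = Some j"
      "x \<in> S (ports (pos (rob c r)) ! j)" "is_dir x" "x \<noteq> rcd (rob c r)"
  shows "r \<noteq> 0 \<and> (st (rob c (r - 1)) = Leader \<or> st (rob c (r - 1)) = Follower) \<and>
    pair_inv ports door c (r - 1) \<and> pair_adjacent ports c (r - 1) \<and> handshake_idle ports c (r - 1) \<and>
    col (rob c (r - 1)) = x"
proof -
  note fc = follower_cases[OF I r(1) r(3)]
  have si: "Suc (r - 1) = r" and lt: "r - 1 < nr c" using fc r(1) by auto
  have "x \<in> S (pred_vertex ports c r)" using r(4,5) unfolding pred_vertex_def by simp
  then have px: "pos (rob c (r - 1)) = pred_vertex ports c r" "col (rob c (r - 1)) = x"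
    using block_inv_follower[OF I r(1) r(3)] r(2,6,7) unfolding pred_view_sound_def by auto
  have "st (rob c (r - 1)) \<noteq> Finished" using block_inv_finished[OF I lt] px r(6)
    by (auto simp: is_dir_def)
  then have prev: "st (rob c (r - 1)) = Leader \<or>
      st (rob c (r - 1)) = Follower" "pair_inv ports door c (r - 1)"
    "pair_adjacent ports c (r - 1) \<or> pair_gap ports c (r - 1)" using fc by auto
  have "\<not> pair_gap ports c (r - 1)" using px lt si unfolding pair_gap_def Let_def unoccupied_def
    by auto
  then have adj: "pair_adjacent ports c (r - 1)" using prev(3) by simp
  have "\<not> handshake_moving c (r - 1)"
  proof
    assume "handshake_moving c (r - 1)"
    then obtain k where "ph c (r - 1) = Moving k" unfolding handshake_moving_def by auto
    then have "col (rob c (r - 1)) = Mov" using block_inv_moving[OF I lt] by simp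
    then show False using px r(6) by (simp add: is_dir_def)
  qed
  moreover have "\<not> handshake_confirmed c (r - 1)" using px r(7) si unfolding handshake_confirmed_def
    by auto
  ultimately have "handshake_idle ports c (r - 1)" using adj unfolding pair_adjacent_def by auto
  then show ?thesis using fc prev adj px by auto
qed

lemma pred_vertex_inj_new_follower:
  assumes I: "block_inv V ports door c" and r: "r < nr c"
    and old: "\<And>x. x < nr c' \<Longrightarrow> x \<noteq> r \<Longrightarrow> st (rob c' x) = Follower \<Longrightarrow> x < nr c \<and> rob c' x = rob c x"
    and new: "st (rob c' r) = Follower \<Longrightarrow> r \<noteq> 0 \<and> pred_vertex ports c' r = pos (rob c (r - 1))"
    and ij: "i < nr c'" "j < nr c'" "st (rob c' i) = Follower" "st (rob c' j) = Follower"
      "pred_vertex ports c' i = pred_vertex ports c' j"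
  shows "i = j"
proof -
  have to_r: "x = r" if "x < nr c'" "st (rob c' x) = Follower" "st (rob c' r) = Follower"
    "pred_vertex ports c' x = pred_vertex ports c' r" for x
  proof (rule ccontr)
    assume "x \<noteq> r"
    with old that have x: "x < nr c" "rob c' x = rob c x" by auto
    have r0: "r \<noteq> 0" using new[OF that(3)] ..
    have "pred_vertex ports c x = pos (rob c (r - 1))"
      using x that(4) new[OF that(3)] unfolding pred_vertex_def by simp
    then have "r - 1 = x - 1" using pred_vertex_occupied[OF I x(1)] that(2) x(2) r by simp
    moreover have "x \<noteq> 0" using block_inv_follower[OF I x(1)] that(2) x(2) by simp
    ultimately show False using r0 \<open>x \<noteq> r\<close> by simp
  qed
  show ?thesis
  proof (cases "i = r \<or> j = r")
    case True
    then show ?thesis using to_r[of i] to_r[of j] ij by auto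
  next
    case False
    then have "i < nr c" "j < nr c" "rob c' i = rob c i" "rob c' j = rob c j" using old ij by auto
    then show ?thesis using block_inv_pred_inj[OF I] ij unfolding pred_vertex_def by auto
  qed
qed

lemma unclaimed_new_follower:
  assumes r: "r < nr c" and t: "unclaimed ports c t" "unoccupied c' t"
    and old: "\<And>x. x < nr c' \<Longrightarrow> x \<noteq> r \<Longrightarrow> st (rob c' x) = Follower \<Longrightarrow> x < nr c \<and> rob c' x = rob c x"
    and new: "st (rob c' r) = Follower \<Longrightarrow> pred_vertex ports c' r = pos (rob c (r - 1))"
  shows "unclaimed ports c' t"
proof -
  have "r - 1 < nr c" using r by simp
  then have "t \<noteq> pos (rob c (r - 1))" using t(1) unfolding unclaimed_def unoccupied_def by blast
  then have "pred_vertex ports c' j \<noteq> t" if "j < nr c'" "st (rob c' j) = Follower" for j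
    using old[OF that(1) _ that(2)] new t(1) that(2) unfolding unclaimed_def pred_vertex_def
    by (cases "j = r") auto
  then show ?thesis using t(2) unfolding unclaimed_def by blast
qed

context robot_update
begin

lemma next_view_kept:
  assumes hfin: "st (rob c r) = Finished \<Longrightarrow> st r' = Finished"
    and col: "is_dir (col (rob c r)) \<Longrightarrow> col (rob c r) \<noteq> rcd (rob c (Suc r)) \<Longrightarrow> col r' = col (rob c r)"
    and nxt: "Suc r < nr c" "st (rob c (Suc r)) = Follower" "ph c (Suc r) = Looked S"
  shows "pred_view_sound ports c' (Suc r) S"
proof (rule pred_view_sound_update_pred)
  show "pred_view_sound ports c (Suc r) S" using block_inv_follower[OF inv nxt(1,2)] nxt(3) by simp
qed (use hfin col pos_kept in \<open>auto simp: rob_eq\<close>)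

lemma next_not_leader: "Suc r < nr c \<Longrightarrow> st (rob c (Suc r)) = Leader \<Longrightarrow> st (rob c r) = Finished"
  using block_inv_leader[OF inv, of "Suc r"] by (simp add: leader_inv_def)

lemma prev_finished_of_leader: "st (rob c r) = Leader \<Longrightarrow> 0 < r \<Longrightarrow> st (rob c (r - 1)) = Finished"
  using block_inv_leader[OF inv r_lt] by (simp add: leader_inv_def)

lemma finished_next_of_active:
  "st r' = Leader \<or> st r' = Finished \<Longrightarrow> 0 < r \<Longrightarrow> finished_next_inv ports c' (r - 1)"
  by (auto simp: finished_next_inv_def rob_eq)

lemma pair_kept_idle:
  assumes "X = Idle" "not_moving c r" "sp r' = sp (rob c r)"
    "handshake_confirmed c r \<Longrightarrow> handshake_confirmed c' r"
    "Suc r < nr c" "st (rob c r) = Leader \<or> st (rob c r) = Follower"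
  shows "pair_inv ports door c' r"
  by (rule pair_inv_update_idle[OF block_inv_pair[OF inv assms(5,6)]])
    (use assms unoccupied_eq pos_kept in \<open>auto simp: rob_eq ph_eq\<close>)

lemma pair_after_confirmed_move:
  assumes look: "ph c r = Looked S" "succ_confirmed ports S (rob c r)"
    and active: "st (rob c r) = Leader \<or> st (rob c r) = Follower" "col (rob c r) = Dir k"
    and upd: "r' = (rob c r)\<lparr>col := Mov\<rparr>" "X = Moving k"
    and nxt: "Suc r < nr c"
  shows "pair_inv ports door c' r"
proof -
  have a: "follower_wf ports c (Suc r)" "pair_adjacent ports c r" "handshake_confirmed c r"
    using confirmed_handshake[OF inv nxt active(1) look] by auto
  have "handshake_moving c' r"
    using a(3) active(2) upd unfolding handshake_confirmed_def handshake_moving_def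
    by (auto simp: rob_eq ph_eq)
  then have "pair_adjacent ports c' r"
    using a(2) upd unfolding pair_adjacent_def pred_vertex_def succ_vertex_def not_moving_def
    by (auto simp: rob_eq ph_eq)
  moreover have "follower_wf ports c' (Suc r)" using a(1) unfolding follower_wf_def
    by (auto simp: rob_eq)
  moreover have "\<exists>s. sp (rob c' r) = Some s \<and> s < length (ports (pos (rob c' r)))"
    using block_inv_pair[OF inv nxt active(1)] upd unfolding pair_inv_def by (auto simp: rob_eq)
  ultimately show ?thesis unfolding pair_inv_def by blast
qed

lemma prev_gap_kept:
  assumes look: "ph c r = Looked S" "st (rob c r) = Follower" "pp (rob c r) = Some j"
      "S (ports (pos (rob c r)) ! j) = {}"
    and upd: "r' = (rob c r)\<lparr>col := C\<rparr>" "C = Dir j \<and> X = Idle \<or> C = Mov \<and> X = Moving j"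
  shows "st (rob c (r - 1)) = Leader \<or> st (rob c (r - 1)) = Follower"
    and "pair_inv ports door c' (r - 1)"
proof -
  note G = follower_pred_gap[OF inv r_lt look]
  then show "st (rob c (r - 1)) = Leader \<or> st (rob c (r - 1)) = Follower" by simp
  have si: "Suc (r - 1) = r" using G by simp
  have rr: "rob c' (r - 1) = rob c (r - 1)" "rob c' r = r'" "ph c' (r - 1) = ph c (r - 1)"
    using G by (auto simp: rob_eq ph_eq)
  have pv: "pred_vertex ports c' r = pred_vertex ports c r"
    "succ_vertex ports c' (r - 1) = succ_vertex ports c (r - 1)"
    using rr upd unfolding pred_vertex_def succ_vertex_def by auto
  have g: "pair_gap ports c (r - 1)" using G by simp
  have ph_r: "ph c' r = X" by (simp add: ph_eq)
  have same: "rcd (rob c' r) = rcd (rob c r)" "pp (rob c' r) = Some j" using rr upd look(3)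
    by simp_all
  have "col (rob c' r) = Dir (the (pp (rob c' r))) \<or>
      (col (rob c' r) = Mov \<and> ph c' r = Moving (the (pp (rob c' r))))"
    "\<forall>k. ph c' r = Moving k \<longrightarrow> k = the (pp (rob c' r))"
    using upd(2) rr(2) ph_r same(2) unfolding upd(1) by auto
  then have "pair_gap ports c' (r - 1)"
    using g same(1) rr(1,3) unfolding pair_gap_def Let_def si pv unoccupied_eq not_moving_def
      by auto
  moreover have "follower_wf ports c' r" using G rr upd unfolding follower_wf_def by simp
  ultimately show "pair_inv ports door c' (r - 1)" using G rr si unfolding pair_inv_def by auto
qed

lemma block_inv_phase_change:
  assumes upd: "r' = rob c r" and not_mv: "not_moving c r" "\<And>k. X \<noteq> Moving k"
    and newcomer: "st (rob c r) = SNone \<Longrightarrow> \<forall>S. X = Looked S \<longrightarrow> (r = 0 \<longleftrightarrow> S (ports door ! 0) = {})"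
    and follower: "st (rob c r) = Follower \<Longrightarrow> \<forall>S. X = Looked S \<longrightarrow> pred_view_sound ports c' r S"
    and leader: "st (rob c r) = Leader \<Longrightarrow> leader_inv ports c' r"
    and pair: "Suc r < nr c \<Longrightarrow> st (rob c r) = Leader \<or> st (rob c r) = Follower \<Longrightarrow>
        pair_inv ports door c' r"
  shows "block_inv V ports door c'"
proof -
  have R: "rob c' = rob c" using config_eq upd by simp
  have nm: "\<forall>i. not_moving c' i = not_moving c i" using not_mv unfolding not_moving_def
    by (auto simp: ph_eq)
  have keep: "st r' = Follower \<Longrightarrow> st (rob c r) = Follower \<and> pp r' = pp (rob c r)" using upd by simp
  show ?thesis
  proof (rule block_inv_preserved_keep)
    show "st r' = Finished \<Longrightarrow> col r' = Off \<and> not_moving c' r \<and> (\<forall>j<r. st (rob c j) = Finished) \<and>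
        (Suc r < nr c \<longrightarrow> finished_next_inv ports c' r)"
      using block_inv_finished[OF inv r_lt] nm finished_next_inv_cong[OF R nm] upd by simp
    show "st r' = SNone \<Longrightarrow> Suc r = nr c \<and> col r' = Off \<and> not_moving c' r \<and>
        (\<forall>S. X = Looked S \<longrightarrow> (r = 0 \<longleftrightarrow> S (ports door ! 0) = {}))"
      using block_inv_newcomer[OF inv r_lt] nm newcomer upd by simp
    show "pair_inv ports door c' (r - 1)"
      if "0 < r" "st (rob c (r - 1)) = Leader \<or> st (rob c (r - 1)) = Follower"
    proof -
      have "pair_inv ports door c (r - 1)" using block_inv_pair[OF inv] that r_lt by simp
      moreover have "\<forall>k. (ph c' (Suc (r - 1)) = Moving k) = (ph c (Suc (r - 1)) = Moving k)"
        using not_mv that unfolding not_moving_def by (auto simp: ph_eq)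
      moreover have "ph c' (r - 1) = ph c (r - 1)" using that(1) by (auto simp: ph_eq)
      ultimately show ?thesis using pair_inv_cong_phase[OF R nr_eq] by simp
    qed
    show "finished_next_inv ports c' (r - 1)" if "0 < r" "st (rob c (r - 1)) = Finished"
      using block_inv_finished[OF inv, of "r - 1"] that r_lt finished_next_inv_cong[OF R nm] by simp
    show "pred_view_sound ports c' (Suc r) S"
      if "Suc r < nr c" "st (rob c (Suc r)) = Follower" "ph c (Suc r) = Looked S" for S
      using block_inv_follower[OF inv that(1,2)] that(3) pred_view_sound_cong[of c' "Suc r" c] R
        by simp
    show "leader_inv ports c' (Suc r)" if "Suc r < nr c" "st (rob c (Suc r)) = Leader"
      by (rule leader_inv_mono[OF block_inv_leader[OF inv that]])
        (use R unclaimed_preserved[OF keep] in \<open>auto simp: ph_eq\<close>)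
  qed (use upd leader pair follower block_inv_follower[OF inv r_lt] not_mv
      in auto)
qed

lemma block_inv_idle:
  assumes look: "ph c r = Looked S" and upd: "r' = rob c r" "X = Idle"
  shows "block_inv V ports door c'"
proof -
  have R: "rob c' = rob c" "ph c' = (ph c)(r := Idle)" using config_eq upd by auto
  have keep: "st r' = Follower \<Longrightarrow> st (rob c r) = Follower \<and> pp r' = pp (rob c r)" using upd by simp
  show ?thesis
  proof (rule block_inv_phase_change)
    show "st (rob c r) = Leader \<Longrightarrow> leader_inv ports c' r"
      using block_inv_leader[OF inv r_lt] unclaimed_preserved[OF keep] R unfolding leader_inv_def
        by auto
    show "pair_inv ports door c' r"
      if "Suc r < nr c" "st (rob c r) = Leader \<or> st (rob c r) = Follower"
      by (rule pair_kept_idle)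
        (use look upd that R in \<open>auto simp: not_moving_def handshake_confirmed_def\<close>)
  qed (use look upd in \<open>auto simp: not_moving_def\<close>)
qed

lemma block_inv_leader_set_light:
  assumes look: "ph c r = Looked S" and lead: "st (rob c r) = Leader" "\<not> is_dir (col (rob c r))"
    and C: "is_dir C"
      "\<And>k. C = Dir k \<Longrightarrow> k < length (ports (pos (rob c r))) \<and>
          unclaimed ports c (ports (pos (rob c r)) ! k)"
    and upd: "r' = (rob c r)\<lparr>col := C\<rparr>" "X = Idle"
  shows "block_inv V ports door c'"
proof -
  have keep: "st r' = Follower \<Longrightarrow> st (rob c r) = Follower \<and> pp r' = pp (rob c r)" using upd by simp
  note W = unclaimed_preserved[OF keep]
  show ?thesis
  proof (rule block_inv_preserved_keep)
    show "leader_inv ports c' r"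
      using block_inv_leader[OF inv r_lt lead(1)] C W upd unfolding leader_inv_def
      by (auto simp: rob_eq ph_eq is_dir_def)
    show "pair_inv ports door c' r" if "Suc r < nr c"
      by (rule pair_kept_idle)
        (use look lead upd that in \<open>auto simp: not_moving_def handshake_confirmed_def\<close>)
    show "pred_view_sound ports c' (Suc r) S'"
      if "Suc r < nr c" "st (rob c (Suc r)) = Follower" "ph c (Suc r) = Looked S'" for S'
      by (rule next_view_kept) (use lead upd that in auto)
  qed (use lead upd W prev_finished_of_leader[OF lead(1)]
      finished_next_of_active next_not_leader in auto)
qed

lemma block_inv_leader_move:
  assumes look: "ph c r = Looked S" "succ_confirmed ports S (rob c r)"
    and lead: "st (rob c r) = Leader" "col (rob c r) = Dir k"
    and upd: "r' = (rob c r)\<lparr>col := Mov\<rparr>" "X = Moving k"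
  shows "block_inv V ports door c'"
proof -
  have keep: "st r' = Follower \<Longrightarrow> st (rob c r) = Follower \<and> pp r' = pp (rob c r)" using upd by simp
  note W = unclaimed_preserved[OF keep]
  note L = block_inv_leader[OF inv r_lt lead(1)]
  have target: "k < length (ports (pos (rob c r)))" "unclaimed ports c (ports (pos (rob c r)) ! k)"
    using L lead(2) unfolding leader_inv_def by auto
  show ?thesis
  proof (rule block_inv_preserved_keep)
    show "leader_inv ports c' r"
      using L target W upd unfolding leader_inv_def by (auto simp: rob_eq ph_eq)
    show "pair_inv ports door c' r" if "Suc r < nr c"
      by (rule pair_after_confirmed_move) (use look lead upd that in auto)
    show "pred_view_sound ports c' (Suc r) S'"
      if "Suc r < nr c" "st (rob c (Suc r)) = Follower" "ph c (Suc r) = Looked S'" for S'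
      by (rule next_view_kept)
        (use lead upd that confirmed_handshake[OF inv that(1) _ look]
          in \<open>auto simp: handshake_confirmed_def\<close>)
  qed (use lead upd target W prev_finished_of_leader[OF lead(1)]
      finished_next_of_active next_not_leader in auto)
qed

lemma block_inv_leader_finish:
  assumes look: "ph c r = Looked S" "succ_confirmed ports S (rob c r)"
    and lead: "st (rob c r) = Leader" "col (rob c r) = DStuck"
    and upd: "r' = (rob c r)\<lparr>st := Finished, col := Off\<rparr>" "X = Idle"
  shows "block_inv V ports door c'"
proof -
  have A: "follower_wf ports c (Suc r) \<and> pair_adjacent ports c r \<and> handshake_confirmed c r"
    if "Suc r < nr c" using confirmed_handshake[OF inv that _ look] lead by simp
  have before: "st (rob c j) = Finished" if "j < r" for j
  proof -
    have "st (rob c (r - 1)) = Finished" using prev_finished_of_leader[OF lead(1)] that by simp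
    then show ?thesis using block_inv_finished[OF inv, of "r - 1"] that r_lt
      by (cases "j = r - 1") auto
  qed
  have "finished_next_inv ports c' r" if "Suc r < nr c"
  proof -
    note a = A[OF that]
    have "rcd (rob c (Suc r)) = DStuck" "col (rob c (Suc r)) \<in> {Conf, Conf2}"
      "pred_vertex ports c (Suc r) = pos (rob c r)" "not_moving c (Suc r)"
      using a lead(2) unfolding handshake_confirmed_def pair_adjacent_def by auto
    then show ?thesis using a pos_kept
      unfolding finished_next_inv_def follower_wf_def pred_vertex_def not_moving_def
      by (auto simp: rob_eq ph_eq)
  qed
  then have own: "col r' = Off \<and> not_moving c' r \<and> (\<forall>j<r. st (rob c j) = Finished) \<and>
      (Suc r < nr c \<longrightarrow> finished_next_inv ports c' r)"
    using before upd unfolding not_moving_def by (auto simp: ph_eq)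
  show ?thesis
  proof (rule block_inv_preserved_keep)
    show "pred_view_sound ports c' (Suc r) S'"
      if "Suc r < nr c" "st (rob c (Suc r)) = Follower" "ph c (Suc r) = Looked S'" for S'
      by (rule next_view_kept) (use upd that A[OF that(1)] in \<open>auto simp: handshake_confirmed_def\<close>)
  qed (use lead upd own
      prev_finished_of_leader[OF lead(1)] finished_next_of_active next_not_leader in auto)
qed

lemma block_inv_none_leader:
  assumes pg: "port_graph V ports door Delta"
    and look: "ph c r = Looked S" "st (rob c r) = SNone" "S (ports (pos (rob c r)) ! 0) = {}"
    and upd: "r' = (rob c r)\<lparr>st := Leader, col := Mov\<rparr>" "X = Moving 0"
  shows "block_inv V ports door c'"
proof -
  note SN = block_inv_newcomer[OF inv r_lt look(2)]
  have at_door: "pos (rob c r) = door" using newcomer_at_door[OF inv r_lt look(2)] .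
  have r0: "r = 0" and single: "nr c = 1" using SN look at_door by auto
  have "unclaimed ports c' (ports door ! 0)"
    using single r0 at_door port_graph_door(2)[OF pg] upd unfolding unclaimed_def unoccupied_def
    by (auto simp: rob_eq)
  then have own_leader: "leader_inv ports c' r"
    using r0 at_door upd unfolding leader_inv_def by (auto simp: rob_eq ph_eq)
  show ?thesis
    by (rule block_inv_preserved_keep)
      (use own_leader upd look r0 single at_door port_graph_door(1)[OF pg] in auto)
qed

lemma block_inv_none_follower:
  assumes pg: "port_graph V ports door Delta"
    and look: "ph c r = Looked S" "st (rob c r) = SNone" "S (ports (pos (rob c r)) ! 0) \<noteq> {}"
    and upd: "r' = (rob c r)\<lparr>st := Follower, col := Off, pp := Some 0, rcd := Off\<rparr>" "X = Idle"
  shows "block_inv V ports door c'"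
proof -
  note SN = block_inv_newcomer[OF inv r_lt look(2)]
  have at_door: "pos (rob c r) = door" using newcomer_at_door[OF inv r_lt look(2)] .
  have r0: "r \<noteq> 0" using SN look at_door by auto
  have si: "Suc (r - 1) = r" using r0 by simp
  note N = newcomer_pred[OF inv r_lt look(2) r0]
  then have prev: "st (rob c (r - 1)) = Leader \<or> st (rob c (r - 1)) = Follower"
    and P: "pair_inv ports door c (r - 1)" by auto
  from N have nc: "pos (rob c (r - 1)) = ports door ! 0" "succ_vertex ports c (r - 1) = door"
    "not_moving c (r - 1)" "\<forall>S. ph c (r - 1) = Looked S \<longrightarrow> no_confirm S door"
    unfolding newcomer_next_def by auto
  have new: "pred_vertex ports c' r = pos (rob c (r - 1))"
    using at_door nc upd unfolding pred_vertex_def by (simp add: rob_eq)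
  have old: "x < nr c \<and> rob c' x = rob c x" if "x < nr c'" "x \<noteq> r" for x
    using that by (simp add: rob_eq)
  have "pair_inv ports door c' (r - 1)"
  proof -
    have rr: "rob c' (r - 1) = rob c (r - 1)" "rob c' r = r'" "ph c' (r - 1) = ph c (r - 1)"
      "ph c' r = Idle"
      using r0 upd by (auto simp: rob_eq ph_eq)
    have "follower_wf ports c' r" using rr at_door port_graph_door(1)[OF pg] upd
      unfolding follower_wf_def by simp
    moreover have "pair_adjacent ports c' (r - 1)"
      unfolding pair_adjacent_def handshake_idle_def si using rr nc new at_door upd
      unfolding succ_vertex_def not_moving_def by auto
    moreover have "\<exists>s. sp (rob c' (r - 1)) = Some s \<and> s < length (ports (pos (rob c' (r - 1))))"
      using P rr unfolding pair_inv_def by simp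
    ultimately show ?thesis using si unfolding pair_inv_def by auto
  qed
  note prev_pair = this
  show ?thesis
  proof (rule block_inv_preserved)
    show "unclaimed ports c' t" if "unclaimed ports c t" for t
      by (rule unclaimed_new_follower[OF r_lt that])
        (use that old new unoccupied_eq in \<open>auto simp: unclaimed_def\<close>)
    show "\<And>i j. i < nr c' \<Longrightarrow> j < nr c' \<Longrightarrow> st (rob c' i) = Follower \<Longrightarrow> st (rob c' j) = Follower \<Longrightarrow>
        pred_vertex ports c' i = pred_vertex ports c' j \<Longrightarrow> i = j"
      by (rule pred_vertex_inj_new_follower[OF inv r_lt]) (use old new r0 in auto)
    show "finished_next_inv ports c' (r - 1)" if "st (rob c (r - 1)) = Finished"
      using prev that by simp
  qed (use upd look(2) prev_pair r0 SN[THEN conjunct1] in simp_all)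
qed

lemma block_inv_follower_record:
  assumes look: "ph c r = Looked S" "st (rob c r) = Follower" "pp (rob c r) = Some j"
      "x \<in> S (ports (pos (rob c r)) ! j)" "is_dir x" "x \<noteq> rcd (rob c r)"
    and upd: "r' = (rob c r)\<lparr>rcd := x, col := (if is_dir (rcd (rob c r)) then Conf2 else Conf)\<rparr>"
      "X = Idle"
  shows "block_inv V ports door c'"
proof -
  note N = follower_sees_new_direction[OF inv r_lt look]
  have si: "Suc (r - 1) = r" using N by simp
  have idle: "rcd (rob c r) = Off" "col (rob c r) \<in> {Off, Mov}"
    using N si unfolding handshake_idle_def by auto
  have prev_pair: "pair_inv ports door c' (r - 1)"
  proof -
    have rr: "rob c' (r - 1) = rob c (r - 1)" "rob c' r = r'" "ph c' (r - 1) = ph c (r - 1)"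
      "ph c' r = Idle"
      using N upd by (auto simp: rob_eq ph_eq)
    have "handshake_confirmed c' (r - 1)"
      using rr si N look(5) idle upd unfolding handshake_confirmed_def by simp
    then have "pair_adjacent ports c' (r - 1)"
      using N rr si upd unfolding pair_adjacent_def pred_vertex_def succ_vertex_def not_moving_def
        by auto
    moreover have "follower_wf ports c' r" using follower_cases[OF inv r_lt look(2)] rr upd
      unfolding follower_wf_def by simp
    moreover have "\<exists>s. sp (rob c' (r - 1)) = Some s \<and> s < length (ports (pos (rob c' (r - 1))))"
      using N rr unfolding pair_inv_def by simp
    ultimately show ?thesis using N si unfolding pair_inv_def by auto
  qed
  have own_pair: "pair_inv ports door c' r" if "Suc r < nr c"
    by (rule pair_kept_idle)
      (use look idle upd that in \<open>auto simp: not_moving_def handshake_confirmed_def is_dir_def\<close>)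
  have next_view: "pred_view_sound ports c' (Suc r) S'"
    if "Suc r < nr c" "st (rob c (Suc r)) = Follower" "ph c (Suc r) = Looked S'" for S'
    by (rule next_view_kept) (use look idle upd that in \<open>auto simp: is_dir_def\<close>)
  show ?thesis
    by (rule block_inv_preserved_keep)
      (use own_pair next_view prev_pair look upd N next_not_leader in auto)
qed

lemma block_inv_follower_show:
  assumes look: "ph c r = Looked S" "st (rob c r) = Follower" "pp (rob c r) = Some j"
      "S (ports (pos (rob c r)) ! j) = {}" "rcd (rob c r) = Dir d" "col (rob c r) \<noteq> Dir j"
    and upd: "r' = (rob c r)\<lparr>col := Dir j\<rparr>" "X = Idle"
  shows "block_inv V ports door c'"
proof -
  note G = follower_pred_gap[OF inv r_lt look(1-4)]
  have si: "Suc (r - 1) = r" using G by simp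
  have confirming: "col (rob c r) \<in> {Conf, Conf2}"
    using G si look unfolding pair_gap_def Let_def by auto
  note prev = prev_gap_kept[OF look(1-4) upd(1)]
  have own_pair: "pair_inv ports door c' r" if "Suc r < nr c"
    by (rule pair_kept_idle)
      (use look confirming upd that
        in \<open>auto simp: not_moving_def handshake_confirmed_def is_dir_def\<close>)
  have next_view: "pred_view_sound ports c' (Suc r) S'"
    if "Suc r < nr c" "st (rob c (Suc r)) = Follower" "ph c (Suc r) = Looked S'" for S'
    by (rule next_view_kept) (use look confirming upd that in \<open>auto simp: is_dir_def\<close>)
  show ?thesis
    by (rule block_inv_preserved_keep)
      (use own_pair next_view look upd G prev next_not_leader in auto)
qed

lemma block_inv_follower_move:
  assumes look: "ph c r = Looked S" "st (rob c r) = Follower" "pp (rob c r) = Some j"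
      "S (ports (pos (rob c r)) ! j) = {}" "col (rob c r) = Dir j"
        "succ_confirmed ports S (rob c r)"
    and upd: "r' = (rob c r)\<lparr>col := Mov\<rparr>" "X = Moving j"
  shows "block_inv V ports door c'"
proof -
  note G = follower_pred_gap[OF inv r_lt look(1-4)]
  have port: "j < length (ports (pos (rob c r)))" using G look(3) unfolding follower_wf_def by auto
  note prev = prev_gap_kept[OF look(1-4) upd(1)]
  have own_pair: "pair_inv ports door c' r" if "Suc r < nr c"
    by (rule pair_after_confirmed_move) (use look upd that in auto)
  have next_view: "pred_view_sound ports c' (Suc r) S'"
    if "Suc r < nr c" "st (rob c (Suc r)) = Follower" "ph c (Suc r) = Looked S'" for S'
    by (rule next_view_kept)
      (use look upd that confirmed_handshake[OF inv that(1) _ look(1,6)]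
        in \<open>auto simp: handshake_confirmed_def\<close>)
  show ?thesis
    by (rule block_inv_preserved_keep)
      (use own_pair next_view look upd G prev port next_not_leader in auto)
qed

lemma block_inv_follower_promote:
  assumes look: "ph c r = Looked S" "st (rob c r) = Follower" "pp (rob c r) = Some j"
      "rcd (rob c r) = DStuck" "Off \<in> S (ports (pos (rob c r)) ! j)"
    and upd: "r' = (rob c r)\<lparr>st := Leader\<rparr>" "X = Idle"
  shows "block_inv V ports door c'"
proof -
  note fc = follower_cases[OF inv r_lt look(2)]
  have "pred_vertex ports c r = ports (pos (rob c r)) ! j" using look(3) unfolding pred_vertex_def
    by simp
  then have prev_fin: "st (rob c (r - 1)) = Finished"
    using block_inv_follower[OF inv r_lt look(2)] look unfolding pred_view_sound_def by simp
  have confirming: "col (rob c r) \<in> {Conf, Conf2}" using fc prev_fin by auto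
  have own_leader: "leader_inv ports c' r" using prev_fin confirming upd fc unfolding leader_inv_def
    by (auto simp: rob_eq ph_eq)
  have own_pair: "pair_inv ports door c' r" if "Suc r < nr c"
    by (rule pair_kept_idle)
      (use look upd that in \<open>auto simp: not_moving_def handshake_confirmed_def rob_eq\<close>)
  have next_view: "pred_view_sound ports c' (Suc r) S'"
    if "Suc r < nr c" "st (rob c (Suc r)) = Follower" "ph c (Suc r) = Looked S'" for S'
    by (rule next_view_kept) (use look upd that in auto)
  show ?thesis
    by (rule block_inv_preserved_keep)
      (use own_leader own_pair next_view look upd fc prev_fin
        finished_next_of_active next_not_leader in auto)
qed

end

lemma leader_target_stays_empty:
  assumes I: "block_inv V ports door c"
    and r: "r < nr c" "ph c r = Looked S" "st (rob c r) = Leader"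
    "col (rob c r) = Dir k"
  shows "S (ports (pos (rob c r)) ! k) = {}"
  using block_inv_leader[OF I r(1) r(3)] r unfolding leader_inv_def by auto

lemma compute_block_inv:
  assumes pg: "port_graph V ports door Delta" and I: "block_inv V ports door c"
    and r: "r < nr c" "ph c r = Looked S" and cp: "compute ports S (rob c r) r' mv"
  shows "block_inv V ports door
    (c\<lparr>rob := (rob c)(r := r'), ph := (ph c)(r := (case mv of None \<Rightarrow> Idle | Some k \<Rightarrow> Moving k))\<rparr>)"
proof -
  have "pos r' = pos (rob c r)" using cp unfolding compute_def by (auto elim: block_rule.cases)
  then interpret robot_update V ports door c
    "c\<lparr>rob := (rob c)(r := r'), ph := (ph c)(r := (case mv of None \<Rightarrow> Idle | Some k \<Rightarrow> Moving k))\<rparr>"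
    r r' "case mv of None \<Rightarrow> Idle | Some k \<Rightarrow> Moving k"
    using I r(1) by unfold_locales simp_all
  consider "block_rule ports S (rob c r) r' mv" | "r' = rob c r" "mv = None"
    using cp unfolding compute_def by blast
  then show ?thesis
  proof cases
    case 2
    then show ?thesis using block_inv_idle[OF r(2)] by simp
  next
    case 1
    then show ?thesis
    proof cases
      case none_leader
      then show ?thesis using block_inv_none_leader[OF pg r(2)] by simp
    next
      case none_follower
      then show ?thesis using block_inv_none_follower[OF pg r(2)] by simp
    next
      case (leader_choose k)
      then have "unclaimed ports c (ports (pos (rob c r)) ! k)" "k < length (ports (pos (rob c r)))"
        using block_inv_leader[OF I r(1)] r(2) unfolding leader_inv_def free_port_def by auto
      then show ?thesis using block_inv_leader_set_light[OF r(2), of "Dir k"] leader_choose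
        by (simp add: is_dir_def)
    next
      case leader_stuck
      then show ?thesis using block_inv_leader_set_light[OF r(2), of DStuck]
        by (simp add: is_dir_def)
    next
      case leader_move
      then show ?thesis using block_inv_leader_move[OF r(2)] by simp
    next
      case leader_rechoose
      then show ?thesis using leader_target_stays_empty[OF I r] by simp
    next
      case leader_restuck
      then show ?thesis using leader_target_stays_empty[OF I r] by simp
    next
      case leader_finish
      then show ?thesis using block_inv_leader_finish[OF r(2)] by simp
    next
      case follower_record
      then show ?thesis using block_inv_follower_record[OF r(2)] by simp
    next
      case follower_show
      then show ?thesis using block_inv_follower_show[OF r(2)] by simp
    next
      case follower_move
      then show ?thesis using block_inv_follower_move[OF r(2)] by simp
    next
      case follower_promote
      then show ?thesis using block_inv_follower_promote[OF r(2)] by simp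
    qed
  qed
qed

lemma look_block_inv:
  assumes pg: "port_graph V ports door Delta" and I: "block_inv V ports door c"
    and r: "r < nr c" "ph c r = Idle"
  shows "block_inv V ports door (c\<lparr>ph := (ph c)(r := Looked (view ports c (pos (rob c r))))\<rparr>)"
    (is "block_inv V ports door ?c'")
proof -
  let ?S = "view ports c (pos (rob c r))"
  interpret robot_update V ports door c ?c' r "rob c r" "Looked ?S"
    using I r(1) by unfold_locales simp_all
  have same: "rob ?c' = rob c" "unclaimed ports ?c' = unclaimed ports c"
    "pred_view_sound ports ?c' = pred_view_sound ports c"
    by (auto simp: unclaimed_def unoccupied_def pred_vertex_def pred_view_sound_def fun_eq_iff)
  show ?thesis
  proof (rule block_inv_phase_change)
    show "st (rob c r) = SNone \<Longrightarrow> \<forall>S. Looked ?S = Looked S \<longrightarrow> (r = 0 \<longleftrightarrow> S (ports door ! 0) = {})"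
      using look_newcomer[OF pg I r(1)] by simp
    show "st (rob c r) = Follower \<Longrightarrow> \<forall>S. Looked ?S = Looked S \<longrightarrow> pred_view_sound ports ?c' r S"
      using look_pred_view_sound[OF I r(1)] same by simp
    show "leader_inv ports ?c' r" if "st (rob c r) = Leader"
      using block_inv_leader[OF I r(1) that] look_free_port_unclaimed[OF pg I r(1) that]
        look_target_empty[OF I r(1) that] r(2) same unfolding leader_inv_def by auto
    show "pair_inv ports door ?c' r"
      if "Suc r < nr c" "st (rob c r) = Leader \<or> st (rob c r) = Follower"
      by (rule look_pair_inv[OF I that(1) block_inv_pair[OF I that] r(2)]) simp
  qed (use r(2) in \<open>auto simp: not_moving_def\<close>)
qed

lemma moving_handshake:
  assumes I: "block_inv V ports door c" and r: "r < nr c" "ph c r = Moving k" "Suc r < nr c"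
  shows "follower_wf ports c (Suc r) \<and> pair_adjacent ports c r \<and> rcd (rob c (Suc r)) = Dir k \<and>
    col (rob c (Suc r)) \<in> {Conf, Conf2} \<and> (st (rob c r) = Leader \<or> st (rob c r) = Follower)"
proof -
  have nm: "\<not> not_moving c r" using r(2) unfolding not_moving_def by auto
  have sr: "st (rob c r) = Leader \<or> st (rob c r) = Follower"
  proof (cases "st (rob c r)")
    case SNone then show ?thesis using block_inv_newcomer[OF I r(1)] nm by simp
  next
    case Finished then show ?thesis using block_inv_finished[OF I r(1)] nm by simp
  qed simp_all
  have P: "pair_inv ports door c r" using block_inv_pair[OF I r(3) sr] .
  have cm: "col (rob c r) = Mov" using block_inv_moving[OF I r(1) r(2)] by simp
  have "\<not> newcomer_next ports door c r" using nm unfolding newcomer_next_def by simp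
  moreover have "\<not> pair_gap ports c r" using nm unfolding pair_gap_def Let_def by simp
  ultimately have fa: "follower_wf ports c (Suc r)" "pair_adjacent ports c r" using P
    unfolding pair_inv_def by auto
  have "\<not> handshake_idle ports c r" using nm unfolding handshake_idle_def by simp
  moreover have "\<not> handshake_confirmed c r" using cm unfolding handshake_confirmed_def
    by (simp add: is_dir_def)
  ultimately have "handshake_moving c r" using fa(2) unfolding pair_adjacent_def by blast
  then show ?thesis using fa sr r(2) unfolding handshake_moving_def by auto
qed

lemma arrive_simps:
  "pos (arrive ports r k) = ports (pos r) ! k"
  "st (arrive ports r k) = st r"
  "col (arrive ports r k) = col r"
  "rcd (arrive ports r k) = Off"
  "sp (arrive ports r k) = Some (port_of ports (ports (pos r) ! k) (pos r))"
  "rcd r = Dir d \<Longrightarrow> st r = Follower \<Longrightarrow> pp (arrive ports r k) = Some d"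
  unfolding arrive_def Let_def by auto

lemma pair_inv_cong_gap:
  assumes "pair_inv ports door c i" "rob c' i = rob c i" "rob c' (Suc i) = rob c (Suc i)"
    "ph c' i = ph c i" "ph c' (Suc i) = ph c (Suc i)"
    "pair_gap ports c i \<Longrightarrow> follower_wf ports c (Suc i) \<Longrightarrow> unoccupied c' (pred_vertex ports c (Suc i))"
  shows "pair_inv ports door c' i"
proof -
  have E: "pred_vertex ports c' (Suc i) = pred_vertex ports c (Suc i)"
    "succ_vertex ports c' i = succ_vertex ports c i"
    using assms(2,3) unfolding pred_vertex_def succ_vertex_def by auto
  have nm: "not_moving c' i = not_moving c i" "not_moving c' (Suc i) = not_moving c (Suc i)"
    using assms(4,5) unfolding not_moving_def by auto
  have sn: "newcomer_next ports door c' i = newcomer_next ports door c i"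
    unfolding newcomer_next_def using E nm assms(2-5) by simp
  have fb: "follower_wf ports c' (Suc i) = follower_wf ports c (Suc i)" unfolding follower_wf_def
    using assms(3) by simp
  have ad: "pair_adjacent ports c' i = pair_adjacent ports c i"
    unfolding pair_adjacent_def handshake_idle_def handshake_confirmed_def handshake_moving_def
    using E nm assms(2-5) by simp
  have gp: "pair_gap ports c i \<Longrightarrow> follower_wf ports c (Suc i) \<Longrightarrow> pair_gap ports c' i"
  proof -
    assume g: "pair_gap ports c i" and fb0: "follower_wf ports c (Suc i)"
    have "unoccupied c' (pred_vertex ports c (Suc i))" using assms(6)[OF g fb0] .
    then show "pair_gap ports c' i" using g unfolding pair_gap_def Let_def using E nm assms(2-5)
      by simp
  qed
  show ?thesis using assms(1) sn fb ad gp assms(2) unfolding pair_inv_def by auto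
qed

text \<open>The end of a Move event of robot \<open>r\<close> through port \<open>k\<close>, covering both rules
  \<open>move\<close> and \<open>move_door\<close> of \<open>astep\<close>.\<close>

locale arrival =
  fixes V :: "'v set" and ports :: "'v \<Rightarrow> 'v list" and door :: 'v and Delta :: nat
    and c c' :: "'v config" and r k :: nat
  assumes pg: "port_graph V ports door Delta"
    and inv: "block_inv V ports door c"
    and r_lt: "r < nr c" and moving: "ph c r = Moving k"
    and nr_cases: "nr c' = nr c \<or> nr c' = Suc (nr c)"
    and rob_after: "\<And>i. i < nr c \<Longrightarrow> rob c' i = (if i = r then arrive ports (rob c r) k else rob c i)"
    and ph_after: "\<And>i. i < nr c \<Longrightarrow> ph c' i = (if i = r then Idle else ph c i)"
    and entered: "nr c' = Suc (nr c) \<Longrightarrow>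
      pos (rob c r) = door \<and> rob c' (nr c) = new_robot door \<and> ph c' (nr c) = Idle"
    and stayed: "nr c' = nr c \<Longrightarrow> pos (rob c r) \<noteq> door"
begin

abbreviation source :: 'v where "source \<equiv> pos (rob c r)"
abbreviation target :: 'v where "target \<equiv> ports source ! k"
abbreviation arrived :: "'v robot" where "arrived \<equiv> arrive ports (rob c r) k"

lemma arrived_rob: "rob c' r = arrived" and arrived_ph: "ph c' r = Idle"
  using rob_after[OF r_lt] ph_after[OF r_lt] by simp_all

lemma other_rob: "i < nr c \<Longrightarrow> i \<noteq> r \<Longrightarrow> rob c' i = rob c i"
  and other_ph: "i < nr c \<Longrightarrow> i \<noteq> r \<Longrightarrow> ph c' i = ph c i"
  using rob_after ph_after by simp_all

lemma fresh_index: "i < nr c' \<Longrightarrow> \<not> i < nr c \<Longrightarrow> i = nr c \<and> nr c' = Suc (nr c)"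
  using nr_cases by auto

lemma mover_col: "col (rob c r) = Mov" and port_lt: "k < length (ports source)"
  using block_inv_moving[OF inv r_lt moving] by simp_all

lemma target_neighbour: "target \<in> set (ports source)"
  using port_lt by simp

lemma source_in_V: "source \<in> V"
  using block_inv_V[OF inv r_lt] .

lemma target_in_V: "target \<in> V"
  using port_graph_neighbour(1)[OF pg source_in_V target_neighbour] .

lemma target_ne_source: "target \<noteq> source"
  using pg source_in_V target_neighbour unfolding port_graph_def by force

lemma mover_cases:
  "st (rob c r) = Leader \<and> unclaimed ports c target \<or>
   st (rob c r) = Follower \<and> r \<noteq> 0 \<and> pair_gap ports c (r - 1) \<and> pair_inv ports door c (r - 1) \<and>
     (st (rob c (r - 1)) = Leader \<or> st (rob c (r - 1)) = Follower) \<and> follower_wf ports c r \<and>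
     pred_vertex ports c r = target \<and> k = the (pp (rob c r))"
proof -
  have nm: "\<not> not_moving c r" using moving unfolding not_moving_def by auto
  show ?thesis
  proof (cases "st (rob c r)")
    case SNone then show ?thesis using block_inv_newcomer[OF inv r_lt] nm by simp
  next
    case Finished then show ?thesis using block_inv_finished[OF inv r_lt] nm by simp
  next
    case Leader
    then show ?thesis using block_inv_leader[OF inv r_lt] moving unfolding leader_inv_def by simp
  next
    case Follower
    note fc = follower_cases[OF inv r_lt Follower]
    have si: "Suc (r - 1) = r" using fc by simp
    have "\<not> pair_adjacent ports c (r - 1)" using nm si unfolding pair_adjacent_def by simp
    moreover have "\<not> (st (rob c (r - 1)) = Finished \<and> not_moving c r)" using nm by simp
    ultimately have g: "pair_gap ports c (r - 1)" "pair_inv ports door c (r - 1)"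
      "st (rob c (r - 1)) = Leader \<or> st (rob c (r - 1)) = Follower" using fc by auto
    have kp: "k = the (pp (rob c r))" using g(1) moving si unfolding pair_gap_def Let_def by auto
    then have "pred_vertex ports c r = target" unfolding pred_vertex_def by simp
    then show ?thesis using Follower fc g kp by auto
  qed
qed

lemma mover_active: "st (rob c r) = Leader \<or> st (rob c r) = Follower"
  using mover_cases by auto

lemma leader_mover: "st (rob c r) = Leader \<Longrightarrow> unclaimed ports c target"
  using mover_cases by auto

lemma follower_mover: "st (rob c r) = Follower \<Longrightarrow>
    r \<noteq> 0 \<and> pair_gap ports c (r - 1) \<and> pair_inv ports door c (r - 1) \<and>
    (st (rob c (r - 1)) = Leader \<or> st (rob c (r - 1)) = Follower) \<and> follower_wf ports c r \<and>
    pred_vertex ports c r = target \<and> k = the (pp (rob c r))"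
  using mover_cases by auto

lemma target_unoccupied: "unoccupied c target"
proof (cases "st (rob c r) = Leader")
  case True
  then show ?thesis using leader_mover unfolding unclaimed_def by simp
next
  case False
  then have "pair_gap ports c (r - 1)" "Suc (r - 1) = r" "pred_vertex ports c r = target"
    using follower_mover mover_active by auto
  then show ?thesis unfolding pair_gap_def Let_def by simp
qed

lemma arrived_simps: "pos arrived = target" "st arrived = st (rob c r)" "col arrived = Mov"
  "rcd arrived = Off" "sp arrived = Some (port_of ports target source)"
  using arrive_simps[where ports = ports and r = "rob c r" and k = k] mover_col by auto

lemma back_port: "port_of ports target source < length (ports target)"
  "ports target ! port_of ports target source = source"
  using port_graph_port_of[OF pg source_in_V target_neighbour] by auto

lemma last_at_door: "pos (rob c (nr c - 1)) = door"
  using block_inv_door[OF inv] .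

lemma entered_case:
  assumes "nr c' = Suc (nr c)"
  shows "r = nr c - 1 \<and> source = door \<and> rob c' (nr c) = new_robot door \<and> ph c' (nr c) = Idle"
proof -
  have "source = door" "rob c' (nr c) = new_robot door" "ph c' (nr c) = Idle"
    using entered[OF assms] by auto
  moreover have "nr c - 1 < nr c" using r_lt by simp
  ultimately show ?thesis using block_inv_inj[OF inv] r_lt last_at_door by metis
qed

lemma stayed_case:
  assumes "nr c' = nr c"
  shows "Suc r < nr c"
proof -
  have "r \<noteq> nr c - 1" using stayed[OF assms] last_at_door by auto
  then show ?thesis using r_lt by simp
qed

lemma target_ne_door: "target \<noteq> door"
proof
  assume "target = door"
  moreover have "nr c - 1 < nr c" using r_lt by simp
  ultimately show False using target_unoccupied last_at_door unfolding unoccupied_def by blast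
qed

lemma pos_after:
  assumes i: "i < nr c'"
  shows "pos (rob c' i) = (if i = r then target else if i < nr c then pos (rob c i) else door)"
proof (cases "i < nr c")
  case True
  then show ?thesis using arrived_rob other_rob arrived_simps by auto
next
  case False
  then have "i = nr c" "nr c' = Suc (nr c)" using fresh_index[OF i] by auto
  then show ?thesis using entered_case r_lt by (simp add: new_robot_def)
qed

lemma st_after: "i < nr c \<Longrightarrow> st (rob c' i) = st (rob c i)"
  using arrived_rob other_rob arrived_simps by (cases "i = r") auto

lemma active_index_old: "i < nr c' \<Longrightarrow> st (rob c' i) \<noteq> SNone \<Longrightarrow> i < nr c"
  using fresh_index[of i] entered_case by (force simp: new_robot_def)

lemma unoccupied_after:
  assumes "unoccupied c x" "x \<noteq> target" "nr c' = Suc (nr c) \<Longrightarrow> x \<noteq> door"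
  shows "unoccupied c' x"
  unfolding unoccupied_def
proof (intro allI impI)
  fix j assume j: "j < nr c'"
  show "pos (rob c' j) \<noteq> x"
    using pos_after[OF j] assms fresh_index[OF j] unfolding unoccupied_def
      by (auto split: if_splits)
qed

lemma source_unoccupied_after:
  assumes "nr c' = nr c"
  shows "unoccupied c' source"
  unfolding unoccupied_def
proof (intro allI impI)
  fix j assume j: "j < nr c'"
  show "pos (rob c' j) \<noteq> source"
    using pos_after[OF j] target_ne_source block_inv_inj[OF inv] r_lt j assms by auto
qed

lemma follower_mover_gap:
  assumes "st (rob c r) = Follower"
  shows "\<exists>d. rcd (rob c r) = Dir d \<and> d < length (ports target) \<and>
      ports target ! d = pos (rob c (r - 1)) \<and>
    succ_vertex ports c (r - 1) = target \<and> not_moving c (r - 1) \<and>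
    (\<forall>S. ph c (r - 1) = Looked S \<longrightarrow> no_confirm S target)"
proof -
  have "pair_gap ports c (r - 1)" "Suc (r - 1) = r" "pred_vertex ports c r = target"
    using follower_mover[OF assms] by auto
  then show ?thesis unfolding pair_gap_def Let_def by auto
qed

lemma follower_mover_pred:
  assumes "st (rob c r) = Follower"
  shows "pred_vertex ports c' r = pos (rob c (r - 1))" "pp arrived \<noteq> None"
    "the (pp arrived) < length (ports target)"
proof -
  obtain d where d: "rcd (rob c r) = Dir d" "d < length (ports target)"
    "ports target ! d = pos (rob c (r - 1))"
    using follower_mover_gap[OF assms] by blast
  have "pp arrived = Some d" using arrive_simps(6)[OF d(1) assms] .
  then show "pred_vertex ports c' r = pos (rob c (r - 1))" "pp arrived \<noteq> None"
    "the (pp arrived) < length (ports target)"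
    unfolding pred_vertex_def using arrived_rob arrived_simps d by auto
qed

lemma follower_after: "x < nr c' \<Longrightarrow> x \<noteq> r \<Longrightarrow> st (rob c' x) = Follower \<Longrightarrow> x < nr c \<and> rob c' x = rob c x"
  using active_index_old other_rob by fastforce

lemma mover_pred_after:
  assumes "st (rob c' r) = Follower"
  shows "r \<noteq> 0 \<and> pred_vertex ports c' r = pos (rob c (r - 1))"
proof -
  have fr: "st (rob c r) = Follower" using assms arrived_rob arrived_simps by simp
  then show ?thesis using follower_mover[OF fr] follower_mover_pred(1)[OF fr] by simp
qed

lemma unclaimed_after:
  assumes t: "unclaimed ports c t" and fr: "st (rob c r) = Follower"
  shows "unclaimed ports c' t"
proof (rule unclaimed_new_follower[OF r_lt t _ follower_after])
  have "t \<noteq> target" using t follower_mover[OF fr] r_lt fr unfolding unclaimed_def by auto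
  moreover have "nr c' = Suc (nr c) \<Longrightarrow> t \<noteq> door"
    using t entered_case r_lt unfolding unclaimed_def unoccupied_def by auto
  ultimately show "unoccupied c' t" using unoccupied_after t unfolding unclaimed_def by blast
qed (use mover_pred_after in auto)

lemma arrival_inj: "\<forall>i<nr c'. \<forall>j<nr c'. pos (rob c' i) = pos (rob c' j) \<longrightarrow> i = j"
proof (intro allI impI)
  fix i j assume i: "i < nr c'" and j: "j < nr c'" and eq: "pos (rob c' i) = pos (rob c' j)"
  have "pos (rob c x) \<noteq> target" if "x < nr c" for x
    using target_unoccupied that unfolding unoccupied_def by auto
  moreover have "pos (rob c x) \<noteq> door" if "x < nr c" "x \<noteq> r" "nr c' = Suc (nr c)" for x
    using entered_case[OF that(3)] block_inv_inj[OF inv] r_lt that(1,2) by metis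
  ultimately show "i = j"
    using eq pos_after[OF i] pos_after[OF j] fresh_index[OF i] fresh_index[OF j] target_ne_door
      block_inv_inj[OF inv] r_lt
    by (auto split: if_splits)
qed

lemma arrival_finished:
  assumes i: "i < nr c'" "st (rob c' i) = Finished"
  shows "col (rob c' i) = Off \<and> not_moving c' i \<and> (\<forall>j<i. st (rob c' j) = Finished) \<and>
    (Suc i < nr c' \<longrightarrow> finished_next_inv ports c' i)"
proof -
  have old: "i < nr c" using active_index_old[OF i(1)] i(2) by simp
  have ir: "i \<noteq> r" using i(2) arrived_rob arrived_simps mover_active by auto
  have same: "rob c' i = rob c i" "ph c' i = ph c i" using other_rob[OF old ir] other_ph[OF old ir]
    by auto
  note F = block_inv_finished[OF inv old i(2)[unfolded same]]
  have "finished_next_inv ports c' i" if si: "Suc i < nr c'"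
  proof -
    have sin: "Suc i < nr c" using si fresh_index[OF si] entered_case ir by force
    have fc: "finished_next_inv ports c i" using F sin by simp
    show ?thesis
    proof (cases "Suc i = r")
      case True
      have "\<not> not_moving c r" using moving unfolding not_moving_def by auto
      then have "st (rob c r) = Leader" using fc True mover_active unfolding finished_next_inv_def
        by auto
      then show ?thesis unfolding finished_next_inv_def using True arrived_rob arrived_simps by simp
    next
      case False
      then show ?thesis using fc finished_next_inv_cong_local[of c' i c ports] same
        other_rob[OF sin False] other_ph[OF sin False] by simp
    qed
  qed
  then show ?thesis using F same st_after old unfolding not_moving_def by auto
qed

lemma arrival_newcomer:
  assumes i: "i < nr c'" "st (rob c' i) = SNone"
  shows "Suc i = nr c' \<and> col (rob c' i) = Off \<and> not_moving c' i \<and>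
    (\<forall>S. ph c' i = Looked S \<longrightarrow> (i = 0 \<longleftrightarrow> S (ports door ! 0) = {}))"
proof (cases "i < nr c")
  case False
  then have "i = nr c" "nr c' = Suc (nr c)" using fresh_index[OF i(1)] by auto
  then show ?thesis using entered_case unfolding not_moving_def by (simp add: new_robot_def)
next
  case True
  have ir: "i \<noteq> r" using i(2) arrived_rob arrived_simps mover_active by auto
  have same: "rob c' i = rob c i" "ph c' i = ph c i"
    using other_rob[OF True ir] other_ph[OF True ir] by auto
  note S = block_inv_newcomer[OF inv True i(2)[unfolded same]]
  have "nr c' = nr c" using S ir entered_case nr_cases by force
  then show ?thesis using S same unfolding not_moving_def by auto
qed

lemma arrival_follower:
  assumes i: "i < nr c'" "st (rob c' i) = Follower"
  shows "i \<noteq> 0 \<and> (\<forall>S. ph c' i = Looked S \<longrightarrow> pred_view_sound ports c' i S)"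
proof -
  have old: "i < nr c" using active_index_old[OF i(1)] i(2) by simp
  have F: "i \<noteq> 0 \<and> (\<forall>S. ph c i = Looked S \<longrightarrow> pred_view_sound ports c i S)"
    using block_inv_follower[OF inv old] st_after[OF old] i(2) by simp
  have "pred_view_sound ports c' i S" if L: "ph c' i = Looked S" for S
  proof -
    have ir: "i \<noteq> r" using L arrived_ph by auto
    have sound: "pred_view_sound ports c i S" using F L other_ph[OF old ir] by simp
    show ?thesis
    proof (cases "i = Suc r")
      case True
      have sr: "Suc r < nr c" using True old by simp
      have pv: "pred_vertex ports c (Suc r) = source"
        using moving_handshake[OF inv r_lt moving sr] unfolding pair_adjacent_def by simp
      have same: "rob c' (Suc r) = rob c (Suc r)" using other_rob[OF sr] by simp
      then have pv': "pred_vertex ports c' (Suc r) = source" using pv unfolding pred_vertex_def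
        by simp
      show ?thesis
        unfolding pred_view_sound_def True pv' using sound unfolding pred_view_sound_def True pv
        using arrived_rob arrived_simps same target_ne_source mover_col by (auto simp: is_dir_def)
    next
      case False
      then have "i - 1 < nr c" "i - 1 \<noteq> r" using F old by auto
      then have "rob c' (i - 1) = rob c (i - 1)" by (rule other_rob)
      then show ?thesis using sound pred_view_sound_cong[of c' i c] other_rob[OF old ir] by simp
    qed
  qed
  then show ?thesis using F by auto
qed

lemma arrival_leader:
  assumes i: "i < nr c'" "st (rob c' i) = Leader"
  shows "leader_inv ports c' i"
proof -
  have old: "i < nr c" using active_index_old[OF i(1)] i(2) by simp
  have lead: "st (rob c i) = Leader" using st_after[OF old] i(2) by simp
  note L = block_inv_leader[OF inv old lead]
  show ?thesis
  proof (cases "i = r")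
    case True
    have "i \<noteq> 0 \<Longrightarrow> st (rob c' (i - 1)) = st (rob c (i - 1))" using st_after old by simp
    then show ?thesis using L True arrived_rob arrived_simps arrived_ph unfolding leader_inv_def
      by auto
  next
    case False
    have fr: "st (rob c r) = Follower"
      using mover_active block_inv_leaders_unique[OF inv old r_lt lead] False by auto
    show ?thesis
    proof (rule leader_inv_mono[OF L])
      show "rob c' i = rob c i" "ph c' i = ph c i"
        using other_rob[OF old False] other_ph[OF old False] by auto
      show "i \<noteq> 0 \<Longrightarrow> st (rob c' (i - 1)) = st (rob c (i - 1))" using st_after old by simp
      show "\<And>t. unclaimed ports c t \<Longrightarrow> unclaimed ports c' t" using unclaimed_after fr by blast
    qed
  qed
qed

lemma arrival_pair_mover:
  assumes "Suc r < nr c'"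
  shows "pair_inv ports door c' r"
proof -
  have port_back: "\<exists>s. sp (rob c' r) = Some s \<and> s < length (ports (pos (rob c' r)))"
    using arrived_rob arrived_simps back_port by simp
  have succ: "succ_vertex ports c' r = source"
    unfolding succ_vertex_def using arrived_rob arrived_simps back_port by simp
  show ?thesis
  proof (cases "nr c' = nr c")
    case False
    then have entered': "nr c' = Suc (nr c)" using nr_cases by auto
    note e = entered_case[OF entered']
    have src: "source = door" using e by blast
    have "k = 0" using port_lt port_graph_door(1)[OF pg] unfolding src by simp
    moreover have "st (rob c' (Suc r)) = SNone" using e r_lt by (simp add: new_robot_def)
    ultimately have "newcomer_next ports door c' r"
      unfolding newcomer_next_def using src arrived_rob arrived_simps succ arrived_ph
      unfolding not_moving_def by simp
    then show ?thesis unfolding pair_inv_def using port_back by blast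
  next
    case True
    have sr: "Suc r < nr c" using stayed_case[OF True] .
    note MP = moving_handshake[OF inv r_lt moving sr]
    have same: "rob c' (Suc r) = rob c (Suc r)" "ph c' (Suc r) = ph c (Suc r)"
      using other_rob[OF sr] other_ph[OF sr] by auto
    have pv: "pred_vertex ports c' (Suc r) = source"
      using MP same unfolding pair_adjacent_def pred_vertex_def by simp
    have "not_moving c (Suc r)" using MP unfolding pair_adjacent_def by simp
    then have "pair_gap ports c' r"
      unfolding pair_gap_def Let_def pv
      using source_unoccupied_after[OF True] succ MP port_lt same arrived_ph arrived_rob
        arrived_simps
      unfolding not_moving_def by auto
    moreover have "follower_wf ports c' (Suc r)" using MP same unfolding follower_wf_def by simp
    ultimately show ?thesis unfolding pair_inv_def using port_back by blast
  qed
qed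

lemma arrival_pair_before_mover:
  assumes p: "Suc p = r" "st (rob c p) = Leader \<or> st (rob c p) = Follower"
  shows "pair_inv ports door c' p"
proof -
  have fr: "st (rob c r) = Follower"
  proof (rule ccontr)
    assume "st (rob c r) \<noteq> Follower"
    then have "st (rob c p) = Finished"
      using mover_active block_inv_leader[OF inv r_lt] p(1) unfolding leader_inv_def by auto
    then show False using p(2) by simp
  qed
  obtain d where d: "rcd (rob c r) = Dir d" "succ_vertex ports c (r - 1) = target"
    "not_moving c (r - 1)" "\<forall>S. ph c (r - 1) = Looked S \<longrightarrow> no_confirm S target"
    using follower_mover_gap[OF fr] by blast
  have pe: "p = r - 1" using p(1) by simp
  have pr: "p < nr c" "p \<noteq> r" using p(1) r_lt by auto
  have same: "rob c' p = rob c p" "ph c' p = ph c p" using other_rob[OF pr] other_ph[OF pr] by auto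
  have "pred_vertex ports c' r = pos (rob c' p)"
    using follower_mover_pred(1)[OF fr] same pe by simp
  moreover have "succ_vertex ports c' p = pos (rob c' r)"
    using same d(2) pe arrived_rob arrived_simps unfolding succ_vertex_def by simp
  moreover have "handshake_idle ports c' p"
    unfolding handshake_idle_def p(1) using arrived_rob arrived_simps d(3,4) same pe p(1)
    unfolding not_moving_def by auto
  ultimately have "pair_adjacent ports c' p"
    unfolding pair_adjacent_def p(1) using arrived_ph unfolding not_moving_def by simp
  moreover have "follower_wf ports c' (Suc p)"
    unfolding p(1) follower_wf_def
      using arrived_rob arrived_simps fr follower_mover_pred(2,3)[OF fr] by auto
  moreover have "\<exists>s. sp (rob c' p) = Some s \<and> s < length (ports (pos (rob c' p)))"
    using follower_mover[OF fr] same pe unfolding pair_inv_def by simp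
  ultimately show ?thesis unfolding pair_inv_def by blast
qed

lemma arrival_pair:
  assumes p: "Suc p < nr c'" "st (rob c' p) = Leader \<or> st (rob c' p) = Follower"
  shows "pair_inv ports door c' p"
proof -
  have old: "p < nr c" using active_index_old[of p] p by auto
  have active: "st (rob c p) = Leader \<or> st (rob c p) = Follower" using st_after[OF old] p(2) by simp
  consider "p = r" | "Suc p = r" | "p \<noteq> r" "Suc p \<noteq> r" by blast
  then show ?thesis
  proof cases
    case 1
    then show ?thesis using arrival_pair_mover p(1) by simp
  next
    case 2
    then show ?thesis using arrival_pair_before_mover active by simp
  next
    case 3
    have sp: "Suc p < nr c"
    proof (rule ccontr)
      assume "\<not> Suc p < nr c"
      then have "Suc p = nr c" "nr c' = Suc (nr c)" using fresh_index[OF p(1)] by auto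
      then show False using entered_case 3(1) by simp
    qed
    show ?thesis
    proof (rule pair_inv_cong_gap[OF block_inv_pair[OF inv sp active]])
      show "rob c' p = rob c p" "ph c' p = ph c p"
        using other_rob[OF old 3(1)] other_ph[OF old 3(1)] by auto
      show "rob c' (Suc p) = rob c (Suc p)" "ph c' (Suc p) = ph c (Suc p)"
        using other_rob[OF sp 3(2)] other_ph[OF sp 3(2)] by auto
    next
      assume g: "pair_gap ports c p" and fw: "follower_wf ports c (Suc p)"
      have empty: "unoccupied c (pred_vertex ports c (Suc p))" using g
        unfolding pair_gap_def Let_def by simp
      have fs: "st (rob c (Suc p)) = Follower" using fw unfolding follower_wf_def by simp
      have "pred_vertex ports c (Suc p) \<noteq> target"
      proof (cases "st (rob c r) = Leader")
        case True
        then show ?thesis using leader_mover fs sp unfolding unclaimed_def by auto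
      next
        case False
        then have fr: "st (rob c r) = Follower" using mover_active by simp
        then show ?thesis using block_inv_pred_inj[OF inv sp r_lt fs fr] follower_mover[OF fr] 3(2)
          by auto
      qed
      moreover have "nr c' = Suc (nr c) \<Longrightarrow> pred_vertex ports c (Suc p) \<noteq> door"
        using empty entered_case r_lt unfolding unoccupied_def by auto
      ultimately show "unoccupied c' (pred_vertex ports c (Suc p))" using unoccupied_after[OF empty]
        by blast
    qed
  qed
qed

theorem block_inv_after_arrival: "block_inv V ports door c'"
proof (rule block_invI)
  show "1 \<le> nr c'" using nr_cases r_lt by auto
  show "pos (rob c' (nr c' - 1)) = door"
  proof (cases "nr c' = nr c")
    case True
    then have "nr c' - 1 \<noteq> r" "nr c' - 1 < nr c" using stayed_case by auto
    then show ?thesis using pos_after[of "nr c' - 1"] True last_at_door by auto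
  next
    case False
    then have "nr c' = Suc (nr c)" using nr_cases by auto
    then show ?thesis using pos_after[of "nr c"] entered_case r_lt by auto
  qed
  show "pos (rob c' i) \<in> V" if "i < nr c'" for i
    using pos_after[OF that] target_in_V block_inv_V[OF inv] port_graph_door(3)[OF pg] by auto
  show "col (rob c' i) = Mov \<and> k' < length (ports (pos (rob c' i)))"
    if i: "i < nr c'" and m: "ph c' i = Moving k'" for i k'
  proof -
    have "i < nr c" using fresh_index[OF i] entered_case m by force
    moreover have "i \<noteq> r" using m arrived_ph by auto
    ultimately show ?thesis using block_inv_moving[OF inv, of i k'] m other_rob other_ph by auto
  qed
  show "\<forall>i<nr c'. \<forall>j<nr c'. pos (rob c' i) = pos (rob c' j) \<longrightarrow> i = j" by (rule arrival_inj)
  show "\<And>i. i < nr c' \<Longrightarrow> st (rob c' i) = Finished \<Longrightarrow> col (rob c' i) = Off \<and> not_moving c' i \<and>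
      (\<forall>j<i. st (rob c' j) = Finished) \<and> (Suc i < nr c' \<longrightarrow> finished_next_inv ports c' i)"
    by (rule arrival_finished)
  show "\<And>i. i < nr c' \<Longrightarrow> st (rob c' i) = SNone \<Longrightarrow> Suc i = nr c' \<and> col (rob c' i) = Off \<and>
      not_moving c' i \<and> (\<forall>S. ph c' i = Looked S \<longrightarrow> (i = 0 \<longleftrightarrow> S (ports door ! 0) = {}))"
    by (rule arrival_newcomer)
  show "\<And>i. i < nr c' \<Longrightarrow> st (rob c' i) = Follower \<Longrightarrow>
      i \<noteq> 0 \<and> (\<forall>S. ph c' i = Looked S \<longrightarrow> pred_view_sound ports c' i S)"
    by (rule arrival_follower)
  show "\<And>i. i < nr c' \<Longrightarrow> st (rob c' i) = Leader \<Longrightarrow> leader_inv ports c' i"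
    by (rule arrival_leader)
  show "\<And>i. Suc i < nr c' \<Longrightarrow> st (rob c' i) = Leader \<or> st (rob c' i) = Follower \<Longrightarrow>
      pair_inv ports door c' i"
    by (rule arrival_pair)
  show "\<And>i j. i < nr c' \<Longrightarrow> j < nr c' \<Longrightarrow> st (rob c' i) = Follower \<Longrightarrow> st (rob c' j) = Follower \<Longrightarrow>
      pred_vertex ports c' i = pred_vertex ports c' j \<Longrightarrow> i = j"
    by (rule pred_vertex_inj_new_follower[OF inv r_lt])
      (use follower_after mover_pred_after in auto)
qed

end

lemma astep_block_inv:
  assumes pg: "port_graph V ports door Delta" and I: "block_inv V ports door c"
    and step: "astep ports door c c'"
  shows "block_inv V ports door c'"
  using step
proof cases
  case look
  then show ?thesis using look_block_inv[OF pg I] by simp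
next
  case comp
  then show ?thesis using compute_block_inv[OF pg I] by simp
next
  case (move i k)
  interpret A: arrival V ports door Delta c c' i k
    by unfold_locales (use pg I move in auto)
  show ?thesis by (rule A.block_inv_after_arrival)
next
  case (move_door i k)
  interpret A: arrival V ports door Delta c c' i k
    by unfold_locales (use pg I move_door in auto)
  show ?thesis by (rule A.block_inv_after_arrival)
qed

lemma execution_block_inv:
  assumes pg: "port_graph V ports door Delta" and ex: "execution ports door e"
  shows "block_inv V ports door (e t)"
proof (induction t)
  case 0
  then show ?case using block_inv_init[OF pg] ex unfolding execution_def by simp
next
  case (Suc t)
  have "astep ports door (e t) (e (Suc t)) \<or> e (Suc t) = e t" using ex unfolding execution_def by blast
  then show ?case using astep_block_inv[OF pg Suc.IH] Suc.IH by auto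
qed

theorem lemma6:
  fixes V :: "'v set" and ports :: "'v \<Rightarrow> 'v list" and door :: 'v and Delta :: nat
    and e :: "nat \<Rightarrow> 'v config"
  assumes "port_graph V ports door Delta"
    and "execution ports door e"
  shows "\<forall>t. card (leaders (e t)) \<le> 1"
  using block_inv_card_leaders[OF execution_block_inv[OF assms]] by blast

end
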